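(* Let $\mathbb{S}=(\mathsf{S},\mu,\eta)$ be a Cartesian $k$-differential monad on a Cartesian $k$-differential category $\mathbb{X}$. Let $\mathsf{DIFF}[\mathsf{EM}(\mathbb{S})]$ be the full subcategory of $\mathsf{EM}(\mathbb{S})$ on the $\mathbb{S}$-algebras $(A,\alpha)$ with $\alpha$ $\mathsf{D}$-linear (equivalently, the differential objects of $\mathsf{EM}(\mathbb{S})$). Then $\mathsf{DIFF}[\mathsf{EM}(\mathbb{S})]$ is a Cartesian $k$-differential category, with products as in $\mathsf{EM}(\mathbb{S})$ and with the $k$-module structure on hom-sets and the differential combinator computed in $\mathbb{X}$, such that the forgetful functor $\mathsf{DIFF}[\mathsf{EM}(\mathbb{S})]\to\mathbb{X}$ is a strict Cartesian $k$-differential functor. In particular, if $\alpha$ and $\beta$ are $\mathsf{D}$-linear $\mathbb{S}$-algebra structures on $A$ and $B$, then for every $\mathbb{S}$-algebra morphism $f:(A,\alpha)\to(B,\beta)$, the derivative $\mathsf{D}[f]$ is an $\mathbb{S}$-algebra morphism $(A\times A,(\alpha\times\alpha)\circ\omega_{A,A})\to(B,\beta)$.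
   Context: Fix a commutative semiring $k$. A left $k$-linear category is a category $\mathbb{X}$ in which each hom-set $\mathbb{X}(A,B)$ is a $k$-module (scalar multiplication $r\cdot f$, addition $+$, zero $0$) such that precomposition is $k$-linear: $(r\cdot f+s\cdot g)\circ x=r\cdot(f\circ x)+s\cdot(g\circ x)$. A map $f$ is $k$-linear if $f\circ(r\cdot x+s\cdot y)=r\cdot(f\circ x)+s\cdot(f\circ y)$ for all suitable $x,y$ and $r,s\in k$. A Cartesian left $k$-linear category is a left $k$-linear category with finite products (terminal object $\ast$, projections $\pi_j:A_1\times\cdots\times A_n\to A_j$, pairing $\langle-,\dots,-\rangle$) in which all projections are $k$-linear. A Cartesian $k$-differential category is a Cartesian left $k$-linear category equipped with a differential combinator $\mathsf{D}$ assigning to each $f:A\to B$ a map $\mathsf{D}[f]:A\times A\to B$ such that: [CD.1] $\mathsf{D}[r\cdot f+s\cdot g]=r\cdot\mathsf{D}[f]+s\cdot\mathsf{D}[g]$; [CD.2] $\mathsf{D}[f]\circ\langle\pi_1,r\cdot\pi_2+s\cdot\pi_3\rangle=r\cdot(\mathsf{D}[f]\circ\langle\pi_1,\pi_2\rangle)+s\cdot(\mathsf{D}[f]\circ\langle\pi_1,\pi_3\rangle)$ (as maps $A\times A\times A\to B$); [CD.3] $\mathsf{D}[1_A]=\pi_2$ and, for $\pi_j:A_1\times\cdots\times A_n\to A_j$, $\mathsf{D}[\pi_j]=\pi_{n+j}$; [CD.4] $\mathsf{D}[\langle f_1,\dots,f_n\rangle]=\langle\mathsf{D}[f_1],\dots,\mathsf{D}[f_n]\rangle$;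 [CD.5] $\mathsf{D}[g\circ f]=\mathsf{D}[g]\circ\langle f\circ\pi_1,\mathsf{D}[f]\rangle$; [CD.6] $\mathsf{D}[\mathsf{D}[f]]\circ\langle\pi_1,0,0,\pi_2\rangle=\mathsf{D}[f]$; [CD.7] $\mathsf{D}[\mathsf{D}[f]]\circ\langle\pi_1,\pi_2,\pi_3,\pi_4\rangle=\mathsf{D}[\mathsf{D}[f]]\circ\langle\pi_1,\pi_3,\pi_2,\pi_4\rangle$ (identifying $(A\times A)\times(A\times A)$ with $A\times A\times A\times A$). A map $f$ is $\mathsf{D}$-linear if $\mathsf{D}[f]=f\circ\pi_2$. For Cartesian left $k$-linear categories $\mathbb{X},\mathbb{Y}$, a strong Cartesian $k$-linear functor is a functor $\mathsf{F}:\mathbb{X}\to\mathbb{Y}$ such that $\mathsf{F}(\ast)\to\ast$ is an isomorphism, the canonical maps $\omega_{A_1,\dots,A_n}=\langle\mathsf{F}(\pi_1),\dots,\mathsf{F}(\pi_n)\rangle:\mathsf{F}(A_1\times\cdots\times A_n)\to\mathsf{F}(A_1)\times\cdots\times\mathsf{F}(A_n)$ are isomorphisms, and $\mathsf{F}(r\cdot f+s\cdot g)=r\cdot\mathsf{F}(f)+s\cdot\mathsf{F}(g)$. It is strict if moreover $\omega$ is the identity. For Cartesian $k$-differential categories, a strong Cartesian $k$-differential functor is a strong Cartesian $k$-linear functor with $\mathsf{D}[\mathsf{F}(f)]=\mathsf{F}(\mathsf{D}[f])\circ\omega^{-1}_{A,A}$ for all $f:A\to B$; a strict Cartesian $k$-differential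 functor is a strict Cartesian $k$-linear functor with $\mathsf{D}[\mathsf{F}(f)]=\mathsf{F}(\mathsf{D}[f])$. A Cartesian $k$-differential monad on a Cartesian $k$-differential category $\mathbb{X}$ is a monad $\mathbb{S}=(\mathsf{S},\mu,\eta)$ on $\mathbb{X}$ such that $\mathsf{S}$ is a strong Cartesian $k$-differential functor and every $\eta_A$ and $\mu_A$ is $\mathsf{D}$-linear. $\mathsf{EM}(\mathbb{S})$ is the category of $\mathbb{S}$-algebras $(A,\alpha)$, $\alpha:\mathsf{S}(A)\to A$ with $\alpha\circ\mu_A=\alpha\circ\mathsf{S}(\alpha)$ and $\alpha\circ\eta_A=1_A$, and algebra morphisms $f:(A,\alpha)\to(B,\beta)$, i.e. $\beta\circ\mathsf{S}(f)=f\circ\alpha$. It has finite products $(A,\alpha)\times(B,\beta)=(A\times B,(\alpha\times\beta)\circ\omega_{A,B})$ and terminal object $(\ast,0)$. *)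

theory Defs
  imports Main
begin

text \<open>Finite products are
encoded by a terminal object and binary products (with chosen projections and
pairing); the n-ary axioms of the paper are stated for binary products.\<close>

record ('o,'a,'k) cdc =
  cObj :: "'o set"
  cArr :: "'a set"
  cdom :: "'a \<Rightarrow> 'o"
  ccod :: "'a \<Rightarrow> 'o"
  ccomp :: "'a \<Rightarrow> 'a \<Rightarrow> 'a"   \<comment> \<open>ccomp g f = g o f\<close>
  cid :: "'o \<Rightarrow> 'a"
  cadd :: "'a \<Rightarrow> 'a \<Rightarrow> 'a"
  csmult :: "'k \<Rightarrow> 'a \<Rightarrow> 'a"
  czero :: "'o \<Rightarrow> 'o \<Rightarrow> 'a"
  cterm :: "'o"
  cprod :: "'o \<Rightarrow> 'o \<Rightarrow> 'o"
  cpr1 :: "'o \<Rightarrow> 'o \<Rightarrow> 'a"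
  cpr2 :: "'o \<Rightarrow> 'o \<Rightarrow> 'a"
  cpair :: "'a \<Rightarrow> 'a \<Rightarrow> 'a"
  cD :: "'a \<Rightarrow> 'a"

definition hom :: "('o,'a,'k) cdc \<Rightarrow> 'o \<Rightarrow> 'o \<Rightarrow> 'a set" where
  "hom C A B = {f \<in> cArr C. cdom C f = A \<and> ccod C f = B}"

definition category :: "('o,'a,'k) cdc \<Rightarrow> bool" where
  "category C \<longleftrightarrow>
     (\<forall>f\<in>cArr C. cdom C f \<in> cObj C \<and> ccod C f \<in> cObj C) \<and>
     (\<forall>A\<in>cObj C. cid C A \<in> hom C A A) \<and>
     (\<forall>A B E f g. f \<in> hom C A B \<longrightarrow> g \<in> hom C B E \<longrightarrow> ccomp C g f \<in> hom C A E) \<and>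
     (\<forall>A B E G f g h. f \<in> hom C A B \<longrightarrow> g \<in> hom C B E \<longrightarrow> h \<in> hom C E G \<longrightarrow>
        ccomp C h (ccomp C g f) = ccomp C (ccomp C h g) f) \<and>
     (\<forall>A B f. f \<in> hom C A B \<longrightarrow> ccomp C f (cid C A) = f \<and> ccomp C (cid C B) f = f)"

definition left_lin_cat :: "('o,'a,'k::comm_semiring_1) cdc \<Rightarrow> bool" where
  "left_lin_cat C \<longleftrightarrow> category C \<and>
     (\<forall>A\<in>cObj C. \<forall>B\<in>cObj C. czero C A B \<in> hom C A B) \<and>
     (\<forall>A B f g. f \<in> hom C A B \<longrightarrow> g \<in> hom C A B \<longrightarrow> cadd C f g \<in> hom C A B) \<and>
     (\<forall>A B r f. f \<in> hom C A B \<longrightarrow> csmult C r f \<in> hom C A B) \<and>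
     (\<forall>A B f g h. f \<in> hom C A B \<longrightarrow> g \<in> hom C A B \<longrightarrow> h \<in> hom C A B \<longrightarrow>
        cadd C (cadd C f g) h = cadd C f (cadd C g h)) \<and>
     (\<forall>A B f g. f \<in> hom C A B \<longrightarrow> g \<in> hom C A B \<longrightarrow> cadd C f g = cadd C g f) \<and>
     (\<forall>A B f. f \<in> hom C A B \<longrightarrow> cadd C f (czero C A B) = f) \<and>
     (\<forall>A B r f g. f \<in> hom C A B \<longrightarrow> g \<in> hom C A B \<longrightarrow>
        csmult C r (cadd C f g) = cadd C (csmult C r f) (csmult C r g)) \<and>
     (\<forall>A B r s f. f \<in> hom C A B \<longrightarrow> csmult C (r + s) f = cadd C (csmult C r f) (csmult C s f)) \<and>
     (\<forall>A B r s f. f \<in> hom C A B \<longrightarrow> csmult C (r * s) f = csmult C r (csmult C s f)) \<and>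
     (\<forall>A B f. f \<in> hom C A B \<longrightarrow> csmult C 1 f = f) \<and>
     (\<forall>A B f. f \<in> hom C A B \<longrightarrow> csmult C 0 f = czero C A B) \<and>
     (\<forall>A\<in>cObj C. \<forall>B\<in>cObj C. \<forall>r. csmult C r (czero C A B) = czero C A B) \<and>
     (\<forall>Z A B x f g r s. x \<in> hom C Z A \<longrightarrow> f \<in> hom C A B \<longrightarrow> g \<in> hom C A B \<longrightarrow>
        ccomp C (cadd C (csmult C r f) (csmult C s g)) x
          = cadd C (csmult C r (ccomp C f x)) (csmult C s (ccomp C g x)))"

definition k_linear :: "('o,'a,'k) cdc \<Rightarrow> 'a \<Rightarrow> bool" where
  "k_linear C f \<longleftrightarrow> (\<forall>Z x y r s. x \<in> hom C Z (cdom C f) \<longrightarrow> y \<in> hom C Z (cdom C f) \<longrightarrow>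
     ccomp C f (cadd C (csmult C r x) (csmult C s y))
       = cadd C (csmult C r (ccomp C f x)) (csmult C s (ccomp C f y)))"

definition cart_lin_cat :: "('o,'a,'k::comm_semiring_1) cdc \<Rightarrow> bool" where
  "cart_lin_cat C \<longleftrightarrow> left_lin_cat C \<and>
     cterm C \<in> cObj C \<and>
     (\<forall>A\<in>cObj C. \<exists>!t. t \<in> hom C A (cterm C)) \<and>
     (\<forall>A\<in>cObj C. \<forall>B\<in>cObj C. cprod C A B \<in> cObj C \<and>
        cpr1 C A B \<in> hom C (cprod C A B) A \<and> cpr2 C A B \<in> hom C (cprod C A B) B \<and>
        k_linear C (cpr1 C A B) \<and> k_linear C (cpr2 C A B)) \<and>
     (\<forall>Z A B f g. f \<in> hom C Z A \<longrightarrow> g \<in> hom C Z B \<longrightarrow>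
        cpair C f g \<in> hom C Z (cprod C A B) \<and>
        ccomp C (cpr1 C A B) (cpair C f g) = f \<and> ccomp C (cpr2 C A B) (cpair C f g) = g) \<and>
     (\<forall>Z A B h. h \<in> hom C Z (cprod C A B) \<longrightarrow>
        cpair C (ccomp C (cpr1 C A B) h) (ccomp C (cpr2 C A B) h) = h)"

definition cart_diff_cat :: "('o,'a,'k::comm_semiring_1) cdc \<Rightarrow> bool" where
  "cart_diff_cat C \<longleftrightarrow> cart_lin_cat C \<and>
     (\<forall>A B f. f \<in> hom C A B \<longrightarrow> cD C f \<in> hom C (cprod C A A) B) \<and>
     (\<forall>A B f g r s. f \<in> hom C A B \<longrightarrow> g \<in> hom C A B \<longrightarrow>
        cD C (cadd C (csmult C r f) (csmult C s g)) = cadd C (csmult C r (cD C f)) (csmult C s (cD C g))) \<and>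
     (\<forall>A B f r s. f \<in> hom C A B \<longrightarrow>
        (let q1 = cpr1 C A (cprod C A A);
             q2 = ccomp C (cpr1 C A A) (cpr2 C A (cprod C A A));
             q3 = ccomp C (cpr2 C A A) (cpr2 C A (cprod C A A))
         in ccomp C (cD C f) (cpair C q1 (cadd C (csmult C r q2) (csmult C s q3)))
            = cadd C (csmult C r (ccomp C (cD C f) (cpair C q1 q2)))
                     (csmult C s (ccomp C (cD C f) (cpair C q1 q3))))) \<and>
     (\<forall>A\<in>cObj C. cD C (cid C A) = cpr2 C A A) \<and>
     (\<forall>A\<in>cObj C. \<forall>B\<in>cObj C.
        cD C (cpr1 C A B) = ccomp C (cpr1 C A B) (cpr2 C (cprod C A B) (cprod C A B)) \<and>
        cD C (cpr2 C A B) = ccomp C (cpr2 C A B) (cpr2 C (cprod C A B) (cprod C A B))) \<and>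
     (\<forall>Z A B f g. f \<in> hom C Z A \<longrightarrow> g \<in> hom C Z B \<longrightarrow>
        cD C (cpair C f g) = cpair C (cD C f) (cD C g)) \<and>
     (\<forall>A B E f g. f \<in> hom C A B \<longrightarrow> g \<in> hom C B E \<longrightarrow>
        cD C (ccomp C g f) = ccomp C (cD C g) (cpair C (ccomp C f (cpr1 C A A)) (cD C f))) \<and>
     (\<forall>A B f. f \<in> hom C A B \<longrightarrow>
        ccomp C (cD C (cD C f))
          (cpair C (cpair C (cpr1 C A A) (czero C (cprod C A A) A))
                   (cpair C (czero C (cprod C A A) A) (cpr2 C A A))) = cD C f) \<and>
     (\<forall>A B f. f \<in> hom C A B \<longrightarrow>
        (let AA = cprod C A A;
             p1 = ccomp C (cpr1 C A A) (cpr1 C AA AA);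
             p2 = ccomp C (cpr2 C A A) (cpr1 C AA AA);
             p3 = ccomp C (cpr1 C A A) (cpr2 C AA AA);
             p4 = ccomp C (cpr2 C A A) (cpr2 C AA AA)
         in ccomp C (cD C (cD C f)) (cpair C (cpair C p1 p2) (cpair C p3 p4))
            = ccomp C (cD C (cD C f)) (cpair C (cpair C p1 p3) (cpair C p2 p4))))"

definition D_linear :: "('o,'a,'k) cdc \<Rightarrow> 'a \<Rightarrow> bool" where
  "D_linear C f \<longleftrightarrow> cD C f = ccomp C f (cpr2 C (cdom C f) (cdom C f))"

definition cfunctor :: "('o,'a,'k) cdc \<Rightarrow> ('p,'b,'k) cdc \<Rightarrow> ('o \<Rightarrow> 'p) \<Rightarrow> ('a \<Rightarrow> 'b) \<Rightarrow> bool" where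
  "cfunctor C C' Fo Fa \<longleftrightarrow>
     (\<forall>A\<in>cObj C. Fo A \<in> cObj C') \<and>
     (\<forall>A B f. f \<in> hom C A B \<longrightarrow> Fa f \<in> hom C' (Fo A) (Fo B)) \<and>
     (\<forall>A\<in>cObj C. Fa (cid C A) = cid C' (Fo A)) \<and>
     (\<forall>A B E f g. f \<in> hom C A B \<longrightarrow> g \<in> hom C B E \<longrightarrow> Fa (ccomp C g f) = ccomp C' (Fa g) (Fa f))"

definition iso :: "('o,'a,'k) cdc \<Rightarrow> 'a \<Rightarrow> bool" where
  "iso C f \<longleftrightarrow> f \<in> cArr C \<and> (\<exists>g \<in> hom C (ccod C f) (cdom C f).
      ccomp C g f = cid C (cdom C f) \<and> ccomp C f g = cid C (ccod C f))"

definition inv_arr :: "('o,'a,'k) cdc \<Rightarrow> 'a \<Rightarrow> 'a" where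
  "inv_arr C f = (SOME g. g \<in> hom C (ccod C f) (cdom C f) \<and>
      ccomp C g f = cid C (cdom C f) \<and> ccomp C f g = cid C (ccod C f))"

definition omega :: "('o,'a,'k) cdc \<Rightarrow> ('p,'b,'k) cdc \<Rightarrow> ('o \<Rightarrow> 'p) \<Rightarrow> ('a \<Rightarrow> 'b) \<Rightarrow> 'o \<Rightarrow> 'o \<Rightarrow> 'b" where
  "omega C C' Fo Fa A B = cpair C' (Fa (cpr1 C A B)) (Fa (cpr2 C A B))"

definition strong_cart_lin_functor ::
  "('o,'a,'k) cdc \<Rightarrow> ('p,'b,'k) cdc \<Rightarrow> ('o \<Rightarrow> 'p) \<Rightarrow> ('a \<Rightarrow> 'b) \<Rightarrow> bool" where
  "strong_cart_lin_functor C C' Fo Fa \<longleftrightarrow> cfunctor C C' Fo Fa \<and>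
     (\<forall>t. t \<in> hom C' (Fo (cterm C)) (cterm C') \<longrightarrow> iso C' t) \<and>
     (\<forall>A\<in>cObj C. \<forall>B\<in>cObj C. iso C' (omega C C' Fo Fa A B)) \<and>
     (\<forall>A B f g r s. f \<in> hom C A B \<longrightarrow> g \<in> hom C A B \<longrightarrow>
        Fa (cadd C (csmult C r f) (csmult C s g)) = cadd C' (csmult C' r (Fa f)) (csmult C' s (Fa g)))"

definition strict_cart_lin_functor ::
  "('o,'a,'k) cdc \<Rightarrow> ('p,'b,'k) cdc \<Rightarrow> ('o \<Rightarrow> 'p) \<Rightarrow> ('a \<Rightarrow> 'b) \<Rightarrow> bool" where
  "strict_cart_lin_functor C C' Fo Fa \<longleftrightarrow> strong_cart_lin_functor C C' Fo Fa \<and>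
     Fo (cterm C) = cterm C' \<and>
     (\<forall>A\<in>cObj C. \<forall>B\<in>cObj C. omega C C' Fo Fa A B = cid C' (Fo (cprod C A B)))"

definition strong_cart_diff_functor ::
  "('o,'a,'k) cdc \<Rightarrow> ('p,'b,'k) cdc \<Rightarrow> ('o \<Rightarrow> 'p) \<Rightarrow> ('a \<Rightarrow> 'b) \<Rightarrow> bool" where
  "strong_cart_diff_functor C C' Fo Fa \<longleftrightarrow> strong_cart_lin_functor C C' Fo Fa \<and>
     (\<forall>A B f. f \<in> hom C A B \<longrightarrow>
        cD C' (Fa f) = ccomp C' (Fa (cD C f)) (inv_arr C' (omega C C' Fo Fa A A)))"

definition strict_cart_diff_functor ::
  "('o,'a,'k) cdc \<Rightarrow> ('p,'b,'k) cdc \<Rightarrow> ('o \<Rightarrow> 'p) \<Rightarrow> ('a \<Rightarrow> 'b) \<Rightarrow> bool" where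
  "strict_cart_diff_functor C C' Fo Fa \<longleftrightarrow> strict_cart_lin_functor C C' Fo Fa \<and>
     (\<forall>A B f. f \<in> hom C A B \<longrightarrow> cD C' (Fa f) = Fa (cD C f))"

definition monad :: "('o,'a,'k) cdc \<Rightarrow> ('o \<Rightarrow> 'o) \<Rightarrow> ('a \<Rightarrow> 'a) \<Rightarrow> ('o \<Rightarrow> 'a) \<Rightarrow> ('o \<Rightarrow> 'a) \<Rightarrow> bool" where
  "monad X So Sa mu eta \<longleftrightarrow> cfunctor X X So Sa \<and>
     (\<forall>A\<in>cObj X. eta A \<in> hom X A (So A) \<and> mu A \<in> hom X (So (So A)) (So A)) \<and>
     (\<forall>A B f. f \<in> hom X A B \<longrightarrow>
        ccomp X (Sa f) (eta A) = ccomp X (eta B) f \<and>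
        ccomp X (Sa f) (mu A) = ccomp X (mu B) (Sa (Sa f))) \<and>
     (\<forall>A\<in>cObj X. ccomp X (mu A) (Sa (mu A)) = ccomp X (mu A) (mu (So A)) \<and>
        ccomp X (mu A) (eta (So A)) = cid X (So A) \<and>
        ccomp X (mu A) (Sa (eta A)) = cid X (So A))"

definition cart_diff_monad ::
  "('o,'a,'k::comm_semiring_1) cdc \<Rightarrow> ('o \<Rightarrow> 'o) \<Rightarrow> ('a \<Rightarrow> 'a) \<Rightarrow> ('o \<Rightarrow> 'a) \<Rightarrow> ('o \<Rightarrow> 'a) \<Rightarrow> bool" where
  "cart_diff_monad X So Sa mu eta \<longleftrightarrow> monad X So Sa mu eta \<and>
     strong_cart_diff_functor X X So Sa \<and>
     (\<forall>A\<in>cObj X. D_linear X (eta A) \<and> D_linear X (mu A))"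

definition is_alg :: "('o,'a,'k) cdc \<Rightarrow> ('o \<Rightarrow> 'o) \<Rightarrow> ('a \<Rightarrow> 'a) \<Rightarrow> ('o \<Rightarrow> 'a) \<Rightarrow> ('o \<Rightarrow> 'a)
    \<Rightarrow> 'o \<Rightarrow> 'a \<Rightarrow> bool" where
  "is_alg X So Sa mu eta A \<alpha> \<longleftrightarrow> A \<in> cObj X \<and> \<alpha> \<in> hom X (So A) A \<and>
     ccomp X \<alpha> (mu A) = ccomp X \<alpha> (Sa \<alpha>) \<and> ccomp X \<alpha> (eta A) = cid X A"

definition alg_mor :: "('o,'a,'k) cdc \<Rightarrow> ('a \<Rightarrow> 'a) \<Rightarrow> 'o \<Rightarrow> 'a \<Rightarrow> 'o \<Rightarrow> 'a \<Rightarrow> 'a \<Rightarrow> bool" where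
  "alg_mor X Sa A \<alpha> B \<beta> f \<longleftrightarrow> f \<in> hom X A B \<and> ccomp X \<beta> (Sa f) = ccomp X f \<alpha>"

definition alg_prod :: "('o,'a,'k) cdc \<Rightarrow> ('o \<Rightarrow> 'o) \<Rightarrow> ('a \<Rightarrow> 'a) \<Rightarrow> 'o \<Rightarrow> 'a \<Rightarrow> 'o \<Rightarrow> 'a \<Rightarrow> 'a" where
  "alg_prod X So Sa A \<alpha> B \<beta> =
     ccomp X (cpair X (ccomp X \<alpha> (cpr1 X (So A) (So B))) (ccomp X \<beta> (cpr2 X (So A) (So B))))
             (omega X X So Sa A B)"

definition DIFF_obj :: "('o,'a,'k) cdc \<Rightarrow> ('o \<Rightarrow> 'o) \<Rightarrow> ('a \<Rightarrow> 'a) \<Rightarrow> ('o \<Rightarrow> 'a) \<Rightarrow> ('o \<Rightarrow> 'a)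
    \<Rightarrow> ('o \<times> 'a) set" where
  "DIFF_obj X So Sa mu eta = {(A, \<alpha>). is_alg X So Sa mu eta A \<alpha> \<and> D_linear X \<alpha>}"

definition DIFF_prod :: "('o,'a,'k) cdc \<Rightarrow> ('o \<Rightarrow> 'o) \<Rightarrow> ('a \<Rightarrow> 'a) \<Rightarrow> 'o \<times> 'a \<Rightarrow> 'o \<times> 'a \<Rightarrow> 'o \<times> 'a" where
  "DIFF_prod X So Sa P Q = (cprod X (fst P) (fst Q), alg_prod X So Sa (fst P) (snd P) (fst Q) (snd Q))"

text \<open>The full subcategory DIFF[EM(S)] of EM(S) on the D-linear algebras; an arrow is a
triple (source algebra, target algebra, underlying map in X).\<close>
definition DIFF_EM :: "('o,'a,'k) cdc \<Rightarrow> ('o \<Rightarrow> 'o) \<Rightarrow> ('a \<Rightarrow> 'a) \<Rightarrow> ('o \<Rightarrow> 'a) \<Rightarrow> ('o \<Rightarrow> 'a)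
    \<Rightarrow> ('o \<times> 'a, ('o \<times> 'a) \<times> ('o \<times> 'a) \<times> 'a, 'k) cdc" where
  "DIFF_EM X So Sa mu eta =
    \<lparr> cObj = DIFF_obj X So Sa mu eta,
      cArr = {(P, Q, f). P \<in> DIFF_obj X So Sa mu eta \<and> Q \<in> DIFF_obj X So Sa mu eta \<and>
                alg_mor X Sa (fst P) (snd P) (fst Q) (snd Q) f},
      cdom = (\<lambda>(P, Q, f). P),
      ccod = (\<lambda>(P, Q, f). Q),
      ccomp = (\<lambda>(Q, R, g) (P, Q', f). (P, R, ccomp X g f)),
      cid = (\<lambda>P. (P, P, cid X (fst P))),
      cadd = (\<lambda>(P, Q, f) (P', Q', g). (P, Q, cadd X f g)),
      csmult = (\<lambda>r (P, Q, f). (P, Q, csmult X r f)),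
      czero = (\<lambda>P Q. (P, Q, czero X (fst P) (fst Q))),
      cterm = (cterm X, czero X (So (cterm X)) (cterm X)),
      cprod = DIFF_prod X So Sa,
      cpr1 = (\<lambda>P Q. (DIFF_prod X So Sa P Q, P, cpr1 X (fst P) (fst Q))),
      cpr2 = (\<lambda>P Q. (DIFF_prod X So Sa P Q, Q, cpr2 X (fst P) (fst Q))),
      cpair = (\<lambda>(P, Q, f) (P', Q', g). (P, DIFF_prod X So Sa Q Q', cpair X f g)),
      cD = (\<lambda>(P, Q, f). (DIFF_prod X So Sa P P, Q, cD X f)) \<rparr>"

definition forget_arr :: "('o \<times> 'a) \<times> ('o \<times> 'a) \<times> 'a \<Rightarrow> 'a" where
  "forget_arr = (\<lambda>(P, Q, f). f)"

end

theory Submission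
  imports Defs
begin

text \<open>Everything in the subcategory of D-linear algebras is computed on underlying maps of X, so
  each axiom of a Cartesian differential category is inherited from X and the forgetful functor is
  strict by construction; what has to be proved is closure. D-linear maps are k-linear, which makes
  sums, scalar multiples and zero maps into a D-linear algebra again algebra morphisms. S preserves
  D-linear maps, since D[S f] is S(D[f]) up to the comparison iso \<open>\<omega>\<close>, so the product
  algebra \<open>\<langle>\<alpha> \<circ> S \<pi>\<^sub>1, \<beta> \<circ> S \<pi>\<^sub>2\<rangle>\<close> is again D-linear. Finally, differentiating the square
  \<open>\<beta> \<circ> S f = f \<circ> \<alpha>\<close> by the chain rule, and using that the derivatives of \<open>\<alpha>\<close> and \<open>\<beta>\<close> only
  see their second argument, shows that D[f] is an algebra morphism out of the product algebra.\<close>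

locale cat =
  fixes X :: "('o,'a,'k) cdc"
  assumes category: "category X"
begin

lemma hom_dom_obj: "f \<in> hom X A B \<Longrightarrow> A \<in> cObj X"
  and hom_cod_obj: "f \<in> hom X A B \<Longrightarrow> B \<in> cObj X"
  using category unfolding category_def hom_def by auto

lemma comp_hom [intro]: "f \<in> hom X A B \<Longrightarrow> g \<in> hom X B E \<Longrightarrow> ccomp X g f \<in> hom X A E"
  using category unfolding category_def by auto

lemma comp_assoc: "f \<in> hom X A B \<Longrightarrow> g \<in> hom X B E \<Longrightarrow> h \<in> hom X E G \<Longrightarrow>
    ccomp X h (ccomp X g f) = ccomp X (ccomp X h g) f"
  using category unfolding category_def by auto

lemma id_hom [intro]: "A \<in> cObj X \<Longrightarrow> cid X A \<in> hom X A A"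
  using category unfolding category_def by auto

lemma comp_id_right: "f \<in> hom X A B \<Longrightarrow> ccomp X f (cid X A) = f"
  and comp_id_left: "f \<in> hom X A B \<Longrightarrow> ccomp X (cid X B) f = f"
  using category unfolding category_def by auto

lemma inv_arr_hom_and_inverse:
  assumes "iso X w" and "w \<in> hom X A B"
  shows "inv_arr X w \<in> hom X B A \<and> ccomp X (inv_arr X w) w = cid X A \<and> ccomp X w (inv_arr X w) = cid X B"
proof -
  have w: "cdom X w = A" "ccod X w = B" using assms(2) unfolding hom_def by auto
  have "\<exists>g. g \<in> hom X (ccod X w) (cdom X w) \<and>
      ccomp X g w = cid X (cdom X w) \<and> ccomp X w g = cid X (ccod X w)"
    using assms(1) unfolding iso_def by blast
  from someI_ex[OF this] show ?thesis unfolding inv_arr_def w .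
qed

lemma iso_id: "A \<in> cObj X \<Longrightarrow> iso X (cid X A)"
  using id_hom[of A] comp_id_right[of "cid X A" A A] unfolding iso_def hom_def by auto

end

locale left_linear =
  fixes X :: "('o,'a,'k::comm_semiring_1) cdc"
  assumes left_linear: "left_lin_cat X"

sublocale left_linear \<subseteq> cat
  using left_linear unfolding left_lin_cat_def by unfold_locales (rule conjunct1)

context left_linear
begin

lemma zero_hom [intro]: "A \<in> cObj X \<Longrightarrow> B \<in> cObj X \<Longrightarrow> czero X A B \<in> hom X A B"
  and add_hom [intro]: "f \<in> hom X A B \<Longrightarrow> g \<in> hom X A B \<Longrightarrow> cadd X f g \<in> hom X A B"
  and smult_hom [intro]: "f \<in> hom X A B \<Longrightarrow> csmult X r f \<in> hom X A B"
  using left_linear unfolding left_lin_cat_def by auto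

lemma add_assoc: "f \<in> hom X A B \<Longrightarrow> g \<in> hom X A B \<Longrightarrow> h \<in> hom X A B \<Longrightarrow>
    cadd X (cadd X f g) h = cadd X f (cadd X g h)"
  and add_comm: "f \<in> hom X A B \<Longrightarrow> g \<in> hom X A B \<Longrightarrow> cadd X f g = cadd X g f"
  and add_zero: "f \<in> hom X A B \<Longrightarrow> cadd X f (czero X A B) = f"
  and smult_add: "f \<in> hom X A B \<Longrightarrow> g \<in> hom X A B \<Longrightarrow>
    csmult X r (cadd X f g) = cadd X (csmult X r f) (csmult X r g)"
  and add_smult: "f \<in> hom X A B \<Longrightarrow> csmult X (r + s) f = cadd X (csmult X r f) (csmult X s f)"
  and mult_smult: "f \<in> hom X A B \<Longrightarrow> csmult X (r * s) f = csmult X r (csmult X s f)"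
  and one_smult: "f \<in> hom X A B \<Longrightarrow> csmult X 1 f = f"
  and zero_smult: "f \<in> hom X A B \<Longrightarrow> csmult X 0 f = czero X A B"
  and smult_zero: "A \<in> cObj X \<Longrightarrow> B \<in> cObj X \<Longrightarrow> csmult X r (czero X A B) = czero X A B"
  and comp_lin_comb: "x \<in> hom X Z A \<Longrightarrow> f \<in> hom X A B \<Longrightarrow> g \<in> hom X A B \<Longrightarrow>
    ccomp X (cadd X (csmult X r f) (csmult X s g)) x
      = cadd X (csmult X r (ccomp X f x)) (csmult X s (ccomp X g x))"
  using left_linear unfolding left_lin_cat_def by auto

text \<open>Additivity, homogeneity and preservation of zero are read off the linear-combination
  axioms at the coefficients (1,1), (r,0) and (0,0).\<close>

lemma lin_comb_one_one:
  assumes "f \<in> hom X A B" and "g \<in> hom X A B"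
  shows "cadd X (csmult X 1 f) (csmult X 1 g) = cadd X f g"
  using one_smult[OF assms(1)] one_smult[OF assms(2)] by simp

lemma lin_comb_zero_right:
  assumes "f \<in> hom X A B" and "g \<in> hom X A B"
  shows "cadd X (csmult X r f) (csmult X 0 g) = csmult X r f"
  using zero_smult[OF assms(2)] add_zero[OF smult_hom[OF assms(1)]] by simp

lemma lin_comb_zero_zero:
  assumes "f \<in> hom X A B" and "g \<in> hom X A B"
  shows "cadd X (csmult X 0 f) (csmult X 0 g) = czero X A B"
  using zero_smult[OF assms(1)] zero_smult[OF assms(2)]
    add_zero[OF zero_hom[OF hom_dom_obj[OF assms(1)] hom_cod_obj[OF assms(1)]]] by simp

lemma comp_add:
  assumes "x \<in> hom X Z A" and "f \<in> hom X A B" and "g \<in> hom X A B"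
  shows "ccomp X (cadd X f g) x = cadd X (ccomp X f x) (ccomp X g x)"
  using comp_lin_comb[OF assms, of 1 1] lin_comb_one_one[OF assms(2,3)]
    lin_comb_one_one[OF comp_hom[OF assms(1,2)] comp_hom[OF assms(1,3)]] by simp

lemma comp_smult:
  assumes "x \<in> hom X Z A" and "f \<in> hom X A B"
  shows "ccomp X (csmult X r f) x = csmult X r (ccomp X f x)"
  using comp_lin_comb[OF assms assms(2), of r 0] lin_comb_zero_right[OF assms(2,2)]
    lin_comb_zero_right[OF comp_hom[OF assms] comp_hom[OF assms]] by simp

lemma zero_comp:
  assumes "x \<in> hom X Z A" and "B \<in> cObj X"
  shows "ccomp X (czero X A B) x = czero X Z B"
proof -
  have z: "czero X A B \<in> hom X A B" using hom_cod_obj[OF assms(1)] assms(2) by blast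
  show ?thesis
    using comp_lin_comb[OF assms(1) z z, of 0 0] lin_comb_zero_zero[OF z z]
      lin_comb_zero_zero[OF comp_hom[OF assms(1) z] comp_hom[OF assms(1) z]] by simp
qed

lemma k_linearD:
  assumes "k_linear X \<beta>" and "\<beta> \<in> hom X C B" and "x \<in> hom X Z C" and "y \<in> hom X Z C"
  shows "ccomp X \<beta> (cadd X (csmult X r x) (csmult X s y))
    = cadd X (csmult X r (ccomp X \<beta> x)) (csmult X s (ccomp X \<beta> y))"
proof -
  have "cdom X \<beta> = C" using assms(2) unfolding hom_def by simp
  then show ?thesis using assms(1,3,4) unfolding k_linear_def by blast
qed

lemma k_linear_add:
  assumes "k_linear X \<beta>" and "\<beta> \<in> hom X C B" and "x \<in> hom X Z C" and "y \<in> hom X Z C"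
  shows "ccomp X \<beta> (cadd X x y) = cadd X (ccomp X \<beta> x) (ccomp X \<beta> y)"
  using k_linearD[OF assms, of 1 1] lin_comb_one_one[OF assms(3,4)]
    lin_comb_one_one[OF comp_hom[OF assms(3,2)] comp_hom[OF assms(4,2)]] by simp

lemma k_linear_smult:
  assumes "k_linear X \<beta>" and "\<beta> \<in> hom X C B" and "x \<in> hom X Z C"
  shows "ccomp X \<beta> (csmult X r x) = csmult X r (ccomp X \<beta> x)"
  using k_linearD[OF assms assms(3), of r 0] lin_comb_zero_right[OF assms(3,3)]
    lin_comb_zero_right[OF comp_hom[OF assms(3,2)] comp_hom[OF assms(3,2)]] by simp

lemma k_linear_zero:
  assumes "k_linear X \<beta>" and "\<beta> \<in> hom X C B" and "Z \<in> cObj X"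
  shows "ccomp X \<beta> (czero X Z C) = czero X Z B"
proof -
  have z: "czero X Z C \<in> hom X Z C" using assms(3) hom_dom_obj[OF assms(2)] by blast
  show ?thesis
    using k_linearD[OF assms(1,2) z z, of 0 0] lin_comb_zero_zero[OF z z]
      lin_comb_zero_zero[OF comp_hom[OF z assms(2)] comp_hom[OF z assms(2)]] by simp
qed

end

locale cartesian_linear =
  fixes X :: "('o,'a,'k::comm_semiring_1) cdc"
  assumes cartesian_linear: "cart_lin_cat X"

sublocale cartesian_linear \<subseteq> left_linear
  using cartesian_linear unfolding cart_lin_cat_def by unfold_locales (rule conjunct1)

context cartesian_linear
begin

lemma terminal_obj: "cterm X \<in> cObj X"
  using cartesian_linear unfolding cart_lin_cat_def by auto

lemma terminal_unique: "t \<in> hom X A (cterm X) \<Longrightarrow> t' \<in> hom X A (cterm X) \<Longrightarrow> t = t'"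
  using cartesian_linear hom_dom_obj unfolding cart_lin_cat_def by metis

lemma prod_obj [intro]: "A \<in> cObj X \<Longrightarrow> B \<in> cObj X \<Longrightarrow> cprod X A B \<in> cObj X"
  and pr1_hom [intro]: "A \<in> cObj X \<Longrightarrow> B \<in> cObj X \<Longrightarrow> cpr1 X A B \<in> hom X (cprod X A B) A"
  and pr2_hom [intro]: "A \<in> cObj X \<Longrightarrow> B \<in> cObj X \<Longrightarrow> cpr2 X A B \<in> hom X (cprod X A B) B"
  and pr1_k_linear: "A \<in> cObj X \<Longrightarrow> B \<in> cObj X \<Longrightarrow> k_linear X (cpr1 X A B)"
  and pr2_k_linear: "A \<in> cObj X \<Longrightarrow> B \<in> cObj X \<Longrightarrow> k_linear X (cpr2 X A B)"
  and pair_hom [intro]: "f \<in> hom X Z A \<Longrightarrow> g \<in> hom X Z B \<Longrightarrow> cpair X f g \<in> hom X Z (cprod X A B)"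
  and pr1_pair [simp]: "f \<in> hom X Z A \<Longrightarrow> g \<in> hom X Z B \<Longrightarrow> ccomp X (cpr1 X A B) (cpair X f g) = f"
  and pr2_pair [simp]: "f \<in> hom X Z A \<Longrightarrow> g \<in> hom X Z B \<Longrightarrow> ccomp X (cpr2 X A B) (cpair X f g) = g"
  and pair_pr_comp: "h \<in> hom X Z (cprod X A B) \<Longrightarrow>
    cpair X (ccomp X (cpr1 X A B) h) (ccomp X (cpr2 X A B) h) = h"
  using cartesian_linear unfolding cart_lin_cat_def by auto

lemma pair_ext:
  "h \<in> hom X Z (cprod X A B) \<Longrightarrow> k \<in> hom X Z (cprod X A B) \<Longrightarrow>
    ccomp X (cpr1 X A B) h = ccomp X (cpr1 X A B) k \<Longrightarrow>
    ccomp X (cpr2 X A B) h = ccomp X (cpr2 X A B) k \<Longrightarrow> h = k"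
  by (metis pair_pr_comp)

lemma pair_comp:
  assumes f: "f \<in> hom X Z A" and g: "g \<in> hom X Z B" and h: "h \<in> hom X W Z"
  shows "ccomp X (cpair X f g) h = cpair X (ccomp X f h) (ccomp X g h)"
proof -
  have A: "A \<in> cObj X" and B: "B \<in> cObj X" using f g hom_cod_obj by blast+
  have fg: "cpair X f g \<in> hom X Z (cprod X A B)" using f g by blast
  show ?thesis
    using pair_pr_comp[OF comp_hom[OF h fg]] comp_assoc[OF h fg pr1_hom[OF A B]]
      comp_assoc[OF h fg pr2_hom[OF A B]] f g by simp
qed

lemma pair_pr_id:
  "A \<in> cObj X \<Longrightarrow> B \<in> cObj X \<Longrightarrow> cpair X (cpr1 X A B) (cpr2 X A B) = cid X (cprod X A B)"
  using pair_pr_comp[OF id_hom[OF prod_obj]] comp_id_right pr1_hom pr2_hom by metis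

end
locale cartesian_differential =
  fixes X :: "('o,'a,'k::comm_semiring_1) cdc"
  assumes cartesian_differential: "cart_diff_cat X"

sublocale cartesian_differential \<subseteq> cartesian_linear
  using cartesian_differential unfolding cart_diff_cat_def by unfold_locales (rule conjunct1)

context cartesian_differential
begin

lemma D_hom [intro]: "f \<in> hom X A B \<Longrightarrow> cD X f \<in> hom X (cprod X A A) B"
  and D_lin_comb: "f \<in> hom X A B \<Longrightarrow> g \<in> hom X A B \<Longrightarrow>
    cD X (cadd X (csmult X r f) (csmult X s g)) = cadd X (csmult X r (cD X f)) (csmult X s (cD X g))"
  and D_id: "A \<in> cObj X \<Longrightarrow> cD X (cid X A) = cpr2 X A A"
  and D_pr1: "A \<in> cObj X \<Longrightarrow> B \<in> cObj X \<Longrightarrow>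
    cD X (cpr1 X A B) = ccomp X (cpr1 X A B) (cpr2 X (cprod X A B) (cprod X A B))"
  and D_pr2: "A \<in> cObj X \<Longrightarrow> B \<in> cObj X \<Longrightarrow>
    cD X (cpr2 X A B) = ccomp X (cpr2 X A B) (cpr2 X (cprod X A B) (cprod X A B))"
  and D_pair: "f \<in> hom X Z A \<Longrightarrow> g \<in> hom X Z B \<Longrightarrow> cD X (cpair X f g) = cpair X (cD X f) (cD X g)"
  and D_comp: "f \<in> hom X A B \<Longrightarrow> g \<in> hom X B E \<Longrightarrow>
    cD X (ccomp X g f) = ccomp X (cD X g) (cpair X (ccomp X f (cpr1 X A A)) (cD X f))"
  and D_D_zero_insertion: "f \<in> hom X A B \<Longrightarrow>
    ccomp X (cD X (cD X f))
      (cpair X (cpair X (cpr1 X A A) (czero X (cprod X A A) A))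
               (cpair X (czero X (cprod X A A) A) (cpr2 X A A))) = cD X f"
  using cartesian_differential unfolding cart_diff_cat_def by auto

lemma D_second_arg_lin_comb_pr:
  "f \<in> hom X A B \<Longrightarrow>
    ccomp X (cD X f) (cpair X (cpr1 X A (cprod X A A))
      (cadd X (csmult X r (ccomp X (cpr1 X A A) (cpr2 X A (cprod X A A))))
              (csmult X s (ccomp X (cpr2 X A A) (cpr2 X A (cprod X A A))))))
    = cadd X (csmult X r (ccomp X (cD X f)
                (cpair X (cpr1 X A (cprod X A A)) (ccomp X (cpr1 X A A) (cpr2 X A (cprod X A A))))))
             (csmult X s (ccomp X (cD X f)
                (cpair X (cpr1 X A (cprod X A A)) (ccomp X (cpr2 X A A) (cpr2 X A (cprod X A A))))))"
  using cartesian_differential unfolding cart_diff_cat_def Let_def by auto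

lemma D_D_symmetric:
  "f \<in> hom X A B \<Longrightarrow>
    ccomp X (cD X (cD X f))
      (cpair X (cpair X (ccomp X (cpr1 X A A) (cpr1 X (cprod X A A) (cprod X A A)))
                        (ccomp X (cpr2 X A A) (cpr1 X (cprod X A A) (cprod X A A))))
               (cpair X (ccomp X (cpr1 X A A) (cpr2 X (cprod X A A) (cprod X A A)))
                        (ccomp X (cpr2 X A A) (cpr2 X (cprod X A A) (cprod X A A)))))
    = ccomp X (cD X (cD X f))
      (cpair X (cpair X (ccomp X (cpr1 X A A) (cpr1 X (cprod X A A) (cprod X A A)))
                        (ccomp X (cpr1 X A A) (cpr2 X (cprod X A A) (cprod X A A))))
               (cpair X (ccomp X (cpr2 X A A) (cpr1 X (cprod X A A) (cprod X A A)))
                        (ccomp X (cpr2 X A A) (cpr2 X (cprod X A A) (cprod X A A)))))"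
  using cartesian_differential unfolding cart_diff_cat_def Let_def by auto

lemma D_second_arg_lin_comb:
  assumes f: "f \<in> hom X A B" and x: "x \<in> hom X Z A" and y: "y \<in> hom X Z A" and z: "z \<in> hom X Z A"
  shows "ccomp X (cD X f) (cpair X x (cadd X (csmult X r y) (csmult X s z)))
    = cadd X (csmult X r (ccomp X (cD X f) (cpair X x y))) (csmult X s (ccomp X (cD X f) (cpair X x z)))"
proof -
  have A: "A \<in> cObj X" using f hom_dom_obj by blast
  define q1 where "q1 = cpr1 X A (cprod X A A)"
  define q2 where "q2 = ccomp X (cpr1 X A A) (cpr2 X A (cprod X A A))"
  define q3 where "q3 = ccomp X (cpr2 X A A) (cpr2 X A (cprod X A A))"
  define h where "h = cpair X x (cpair X y z)"
  have yz: "cpair X y z \<in> hom X Z (cprod X A A)" using y z by blast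
  have h: "h \<in> hom X Z (cprod X A (cprod X A A))" unfolding h_def using x yz by blast
  have p2: "cpr2 X A (cprod X A A) \<in> hom X (cprod X A (cprod X A A)) (cprod X A A)" using A by blast
  have q1: "q1 \<in> hom X (cprod X A (cprod X A A)) A" and q2: "q2 \<in> hom X (cprod X A (cprod X A A)) A"
    and q3: "q3 \<in> hom X (cprod X A (cprod X A A)) A"
    unfolding q1_def q2_def q3_def using A p2 by blast+
  have p2h: "ccomp X (cpr2 X A (cprod X A A)) h = cpair X y z" unfolding h_def using x yz by simp
  have q1h: "ccomp X q1 h = x" unfolding q1_def h_def using x yz by simp
  have q2h: "ccomp X q2 h = y"
    unfolding q2_def using comp_assoc[OF h p2 pr1_hom[OF A A]] p2h y z by simp
  have q3h: "ccomp X q3 h = z"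
    unfolding q3_def using comp_assoc[OF h p2 pr2_hom[OF A A]] p2h y z by simp
  have Df: "cD X f \<in> hom X (cprod X A A) B" using f by blast
  have comb: "cadd X (csmult X r q2) (csmult X s q3) \<in> hom X (cprod X A (cprod X A A)) A"
    using q2 q3 by blast
  have Df_h: "ccomp X (ccomp X (cD X f) (cpair X q1 q)) h = ccomp X (cD X f) (cpair X x (ccomp X q h))"
    if "q \<in> hom X (cprod X A (cprod X A A)) A" for q
    using comp_assoc[OF h pair_hom[OF q1 that] Df] pair_comp[OF q1 that h] q1h by simp
  have "ccomp X (cD X f) (cpair X x (cadd X (csmult X r y) (csmult X s z)))
      = ccomp X (ccomp X (cD X f) (cpair X q1 (cadd X (csmult X r q2) (csmult X s q3)))) h"
    using Df_h[OF comb] comp_lin_comb[OF h q2 q3, of r s] q2h q3h by simp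
  also have "\<dots> = ccomp X (cadd X (csmult X r (ccomp X (cD X f) (cpair X q1 q2)))
                                   (csmult X s (ccomp X (cD X f) (cpair X q1 q3)))) h"
    using D_second_arg_lin_comb_pr[OF f, of r s] unfolding q1_def q2_def q3_def by simp
  also have "\<dots> = cadd X (csmult X r (ccomp X (cD X f) (cpair X x y)))
                         (csmult X s (ccomp X (cD X f) (cpair X x z)))"
    using comp_lin_comb[OF h comp_hom[OF pair_hom[OF q1 q2] Df] comp_hom[OF pair_hom[OF q1 q3] Df]]
      Df_h[OF q2] Df_h[OF q3] q2h q3h by simp
  finally show ?thesis .
qed

lemma D_linear_iff: "f \<in> hom X A B \<Longrightarrow> D_linear X f \<longleftrightarrow> cD X f = ccomp X f (cpr2 X A A)"
  unfolding D_linear_def hom_def by simp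

lemma D_linear_D_pair:
  assumes "D_linear X \<beta>" and "\<beta> \<in> hom X C B" and "x \<in> hom X Z C" and "v \<in> hom X Z C"
  shows "ccomp X (cD X \<beta>) (cpair X x v) = ccomp X \<beta> v"
proof -
  have C: "C \<in> cObj X" using assms(2) hom_dom_obj by blast
  show ?thesis
    using assms(1)[unfolded D_linear_iff[OF assms(2)]] comp_assoc[OF pair_hom[OF assms(3,4)] pr2_hom[OF C C] assms(2)]
      assms(3,4) by simp
qed

text \<open>Linearity in the second argument of the derivative of a D-linear map is
  linearity of the map itself.\<close>

lemma D_linear_imp_k_linear:
  assumes "D_linear X \<beta>" and \<beta>: "\<beta> \<in> hom X C B"
  shows "k_linear X \<beta>"
  unfolding k_linear_def
proof (intro allI impI)
  fix Z x y r s
  assume "x \<in> hom X Z (cdom X \<beta>)" and "y \<in> hom X Z (cdom X \<beta>)"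
  then have x: "x \<in> hom X Z C" and y: "y \<in> hom X Z C" using \<beta> unfolding hom_def by auto
  have "cadd X (csmult X r x) (csmult X s y) \<in> hom X Z C" using x y by blast
  then have "ccomp X \<beta> (cadd X (csmult X r x) (csmult X s y))
      = ccomp X (cD X \<beta>) (cpair X x (cadd X (csmult X r x) (csmult X s y)))"
    using D_linear_D_pair[OF assms x] by simp
  also have "\<dots> = cadd X (csmult X r (ccomp X (cD X \<beta>) (cpair X x x)))
                         (csmult X s (ccomp X (cD X \<beta>) (cpair X x y)))"
    by (rule D_second_arg_lin_comb[OF \<beta> x x y])
  also have "\<dots> = cadd X (csmult X r (ccomp X \<beta> x)) (csmult X s (ccomp X \<beta> y))"
    using D_linear_D_pair[OF assms x x] D_linear_D_pair[OF assms x y] by simp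
  finally show "ccomp X \<beta> (cadd X (csmult X r x) (csmult X s y))
      = cadd X (csmult X r (ccomp X \<beta> x)) (csmult X s (ccomp X \<beta> y))" .
qed

lemma D_linear_comp:
  assumes "D_linear X p" and p: "p \<in> hom X P B" and "D_linear X \<alpha>" and \<alpha>: "\<alpha> \<in> hom X B A"
  shows "D_linear X (ccomp X \<alpha> p)"
proof -
  have P: "P \<in> cObj X" using p hom_dom_obj by blast
  have "cD X (ccomp X \<alpha> p) = ccomp X (cD X \<alpha>) (cpair X (ccomp X p (cpr1 X P P)) (cD X p))"
    using D_comp[OF p \<alpha>] .
  also have "\<dots> = ccomp X \<alpha> (cD X p)"
    using D_linear_D_pair[OF assms(3) \<alpha> comp_hom[OF pr1_hom[OF P P] p] D_hom[OF p]] .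
  also have "\<dots> = ccomp X (ccomp X \<alpha> p) (cpr2 X P P)"
    using assms(1)[unfolded D_linear_iff[OF p]] comp_assoc[OF pr2_hom[OF P P] p \<alpha>] by simp
  finally show ?thesis using D_linear_iff[OF comp_hom[OF p \<alpha>]] by simp
qed

lemma D_linear_pair:
  assumes "D_linear X f" and f: "f \<in> hom X Z A" and "D_linear X g" and g: "g \<in> hom X Z B"
  shows "D_linear X (cpair X f g)"
proof -
  have Z: "Z \<in> cObj X" using f hom_dom_obj by blast
  show ?thesis
    using D_pair[OF f g] assms(1)[unfolded D_linear_iff[OF f]] assms(3)[unfolded D_linear_iff[OF g]]
      pair_comp[OF f g pr2_hom[OF Z Z]] D_linear_iff[OF pair_hom[OF f g]] by simp
qed

lemma D_linear_pr1: "A \<in> cObj X \<Longrightarrow> B \<in> cObj X \<Longrightarrow> D_linear X (cpr1 X A B)"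
  and D_linear_pr2: "A \<in> cObj X \<Longrightarrow> B \<in> cObj X \<Longrightarrow> D_linear X (cpr2 X A B)"
  using D_linear_iff[OF pr1_hom] D_linear_iff[OF pr2_hom] D_pr1 D_pr2 by simp_all

end
locale cartesian_monad = cartesian_linear +
  fixes So :: "'o \<Rightarrow> 'o" and Sa :: "'a \<Rightarrow> 'a" and mu eta :: "'o \<Rightarrow> 'a"
  assumes monad: "monad X So Sa mu eta"
begin

lemma S_obj [intro]: "A \<in> cObj X \<Longrightarrow> So A \<in> cObj X"
  and S_hom [intro]: "f \<in> hom X A B \<Longrightarrow> Sa f \<in> hom X (So A) (So B)"
  and S_id: "A \<in> cObj X \<Longrightarrow> Sa (cid X A) = cid X (So A)"
  and S_comp: "f \<in> hom X A B \<Longrightarrow> g \<in> hom X B E \<Longrightarrow> Sa (ccomp X g f) = ccomp X (Sa g) (Sa f)"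
  using monad unfolding monad_def cfunctor_def by auto

lemma eta_hom [intro]: "A \<in> cObj X \<Longrightarrow> eta A \<in> hom X A (So A)"
  and mu_hom [intro]: "A \<in> cObj X \<Longrightarrow> mu A \<in> hom X (So (So A)) (So A)"
  and eta_natural: "f \<in> hom X A B \<Longrightarrow> ccomp X (Sa f) (eta A) = ccomp X (eta B) f"
  and mu_natural: "f \<in> hom X A B \<Longrightarrow> ccomp X (Sa f) (mu A) = ccomp X (mu B) (Sa (Sa f))"
  using monad unfolding monad_def by auto

lemma is_algD:
  assumes "is_alg X So Sa mu eta A \<alpha>"
  shows "A \<in> cObj X" and "\<alpha> \<in> hom X (So A) A"
    and "ccomp X \<alpha> (mu A) = ccomp X \<alpha> (Sa \<alpha>)" and "ccomp X \<alpha> (eta A) = cid X A"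
  using assms unfolding is_alg_def by auto

lemma alg_mor_hom: "alg_mor X Sa A \<alpha> B \<beta> f \<Longrightarrow> f \<in> hom X A B"
  unfolding alg_mor_def by blast

lemma omega_hom:
  "A \<in> cObj X \<Longrightarrow> B \<in> cObj X \<Longrightarrow>
    omega X X So Sa A B \<in> hom X (So (cprod X A B)) (cprod X (So A) (So B))"
  unfolding omega_def by (intro pair_hom S_hom pr1_hom pr2_hom)

lemma pr1_omega: "A \<in> cObj X \<Longrightarrow> B \<in> cObj X \<Longrightarrow>
    ccomp X (cpr1 X (So A) (So B)) (omega X X So Sa A B) = Sa (cpr1 X A B)"
  and pr2_omega: "A \<in> cObj X \<Longrightarrow> B \<in> cObj X \<Longrightarrow>
    ccomp X (cpr2 X (So A) (So B)) (omega X X So Sa A B) = Sa (cpr2 X A B)"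
  unfolding omega_def using S_hom[OF pr1_hom[of A B]] S_hom[OF pr2_hom[of A B]] by simp_all

lemma alg_prod_hom:
  assumes "\<alpha> \<in> hom X (So A) A" and "\<beta> \<in> hom X (So B) B"
  shows "alg_prod X So Sa A \<alpha> B \<beta> \<in> hom X (So (cprod X A B)) (cprod X A B)"
proof -
  have A: "A \<in> cObj X" and B: "B \<in> cObj X" using assms hom_cod_obj by blast+
  show ?thesis unfolding alg_prod_def
    using omega_hom[OF A B] comp_hom[OF pr1_hom[OF S_obj[OF A] S_obj[OF B]] assms(1)]
      comp_hom[OF pr2_hom[OF S_obj[OF A] S_obj[OF B]] assms(2)] by blast
qed

lemma alg_mor_pr1:
  assumes \<alpha>: "\<alpha> \<in> hom X (So A) A" and \<beta>: "\<beta> \<in> hom X (So B) B"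
  shows "alg_mor X Sa (cprod X A B) (alg_prod X So Sa A \<alpha> B \<beta>) A \<alpha> (cpr1 X A B)"
proof -
  have A: "A \<in> cObj X" and B: "B \<in> cObj X" using assms hom_cod_obj by blast+
  have SA: "So A \<in> cObj X" and SB: "So B \<in> cObj X" using A B by blast+
  have x: "ccomp X \<alpha> (cpr1 X (So A) (So B)) \<in> hom X (cprod X (So A) (So B)) A" using \<alpha> SA SB by blast
  have y: "ccomp X \<beta> (cpr2 X (So A) (So B)) \<in> hom X (cprod X (So A) (So B)) B" using \<beta> SA SB by blast
  have "ccomp X (cpr1 X A B) (alg_prod X So Sa A \<alpha> B \<beta>)
      = ccomp X (ccomp X \<alpha> (cpr1 X (So A) (So B))) (omega X X So Sa A B)"
    unfolding alg_prod_def using comp_assoc[OF omega_hom[OF A B] pair_hom[OF x y] pr1_hom[OF A B]] x y by simp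
  also have "\<dots> = ccomp X \<alpha> (Sa (cpr1 X A B))"
    using comp_assoc[OF omega_hom[OF A B] pr1_hom[OF SA SB] \<alpha>] pr1_omega[OF A B] by simp
  finally show ?thesis unfolding alg_mor_def using A B by auto
qed

lemma alg_mor_pr2:
  assumes \<alpha>: "\<alpha> \<in> hom X (So A) A" and \<beta>: "\<beta> \<in> hom X (So B) B"
  shows "alg_mor X Sa (cprod X A B) (alg_prod X So Sa A \<alpha> B \<beta>) B \<beta> (cpr2 X A B)"
proof -
  have A: "A \<in> cObj X" and B: "B \<in> cObj X" using assms hom_cod_obj by blast+
  have SA: "So A \<in> cObj X" and SB: "So B \<in> cObj X" using A B by blast+
  have x: "ccomp X \<alpha> (cpr1 X (So A) (So B)) \<in> hom X (cprod X (So A) (So B)) A" using \<alpha> SA SB by blast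
  have y: "ccomp X \<beta> (cpr2 X (So A) (So B)) \<in> hom X (cprod X (So A) (So B)) B" using \<beta> SA SB by blast
  have "ccomp X (cpr2 X A B) (alg_prod X So Sa A \<alpha> B \<beta>)
      = ccomp X (ccomp X \<beta> (cpr2 X (So A) (So B))) (omega X X So Sa A B)"
    unfolding alg_prod_def using comp_assoc[OF omega_hom[OF A B] pair_hom[OF x y] pr2_hom[OF A B]] x y by simp
  also have "\<dots> = ccomp X \<beta> (Sa (cpr2 X A B))"
    using comp_assoc[OF omega_hom[OF A B] pr2_hom[OF SA SB] \<beta>] pr2_omega[OF A B] by simp
  finally show ?thesis unfolding alg_mor_def using A B by auto
qed

lemma alg_prod_eq_pair:
  assumes "\<alpha> \<in> hom X (So A) A" and "\<beta> \<in> hom X (So B) B"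
  shows "alg_prod X So Sa A \<alpha> B \<beta>
    = cpair X (ccomp X \<alpha> (Sa (cpr1 X A B))) (ccomp X \<beta> (Sa (cpr2 X A B)))"
  using pair_pr_comp[OF alg_prod_hom[OF assms]] alg_mor_pr1[OF assms] alg_mor_pr2[OF assms]
  unfolding alg_mor_def by simp

lemma alg_mor_comp_S:
  assumes p: "alg_mor X Sa P \<gamma> A \<alpha> p" and \<gamma>: "\<gamma> \<in> hom X (So P) P" and \<alpha>: "\<alpha> \<in> hom X (So A) A"
    and h: "h \<in> hom X Z P"
  shows "ccomp X p (ccomp X \<gamma> (Sa h)) = ccomp X \<alpha> (Sa (ccomp X p h))"
proof -
  have p_hom: "p \<in> hom X P A" using p by (rule alg_mor_hom)
  have "ccomp X p (ccomp X \<gamma> (Sa h)) = ccomp X (ccomp X \<alpha> (Sa p)) (Sa h)"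
    using comp_assoc[OF S_hom[OF h] \<gamma> p_hom] p unfolding alg_mor_def by simp
  also have "\<dots> = ccomp X \<alpha> (Sa (ccomp X p h))"
    using comp_assoc[OF S_hom[OF h] S_hom[OF p_hom] \<alpha>] S_comp[OF h p_hom] by simp
  finally show ?thesis .
qed

text \<open>An algebra morphism out of a candidate structure \<open>\<gamma>\<close> cannot distinguish the two sides
  of the algebra laws for \<open>\<gamma>\<close>; for the jointly monic projections this proves the laws.\<close>

lemma alg_mor_algebra_laws:
  assumes \<alpha>: "is_alg X So Sa mu eta A \<alpha>" and p: "alg_mor X Sa P \<gamma> A \<alpha> p" and \<gamma>: "\<gamma> \<in> hom X (So P) P"
  shows "ccomp X p (ccomp X \<gamma> (mu P)) = ccomp X p (ccomp X \<gamma> (Sa \<gamma>))"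
    and "ccomp X p (ccomp X \<gamma> (eta P)) = p"
proof -
  note A = is_algD[OF \<alpha>]
  have P: "P \<in> cObj X" using \<gamma> hom_cod_obj by blast
  have p_hom: "p \<in> hom X P A" and p_eq: "ccomp X p \<gamma> = ccomp X \<alpha> (Sa p)"
    using p unfolding alg_mor_def by auto
  have Sp: "Sa p \<in> hom X (So P) (So A)" and SSp: "Sa (Sa p) \<in> hom X (So (So P)) (So (So A))"
    using p_hom by blast+
  have "ccomp X p (ccomp X \<gamma> (mu P)) = ccomp X \<alpha> (ccomp X (Sa p) (mu P))"
    using comp_assoc[OF mu_hom[OF P] \<gamma> p_hom] comp_assoc[OF mu_hom[OF P] Sp A(2)] p_eq by simp
  also have "\<dots> = ccomp X (ccomp X \<alpha> (Sa \<alpha>)) (Sa (Sa p))"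
    using mu_natural[OF p_hom] comp_assoc[OF SSp mu_hom[OF A(1)] A(2)] A(3) by simp
  also have "\<dots> = ccomp X \<alpha> (Sa (ccomp X p \<gamma>))"
    using comp_assoc[OF SSp S_hom[OF A(2)] A(2)] S_comp[OF Sp A(2)] p_eq by simp
  also have "\<dots> = ccomp X p (ccomp X \<gamma> (Sa \<gamma>))"
    using alg_mor_comp_S[OF p \<gamma> A(2) \<gamma>] by simp
  finally show "ccomp X p (ccomp X \<gamma> (mu P)) = ccomp X p (ccomp X \<gamma> (Sa \<gamma>))" .
  have "ccomp X p (ccomp X \<gamma> (eta P)) = ccomp X \<alpha> (ccomp X (Sa p) (eta P))"
    using comp_assoc[OF eta_hom[OF P] \<gamma> p_hom] comp_assoc[OF eta_hom[OF P] Sp A(2)] p_eq by simp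
  also have "\<dots> = p"
    using eta_natural[OF p_hom] comp_assoc[OF p_hom eta_hom[OF A(1)] A(2)] A(4) comp_id_left[OF p_hom]
    by simp
  finally show "ccomp X p (ccomp X \<gamma> (eta P)) = p" .
qed

lemma alg_prod_is_alg:
  assumes \<alpha>: "is_alg X So Sa mu eta A \<alpha>" and \<beta>: "is_alg X So Sa mu eta B \<beta>"
  shows "is_alg X So Sa mu eta (cprod X A B) (alg_prod X So Sa A \<alpha> B \<beta>)"
proof -
  note A = is_algD[OF \<alpha>] and B = is_algD[OF \<beta>]
  let ?P = "cprod X A B" and ?\<gamma> = "alg_prod X So Sa A \<alpha> B \<beta>"
  have P: "?P \<in> cObj X" using A(1) B(1) by blast
  have \<gamma>: "?\<gamma> \<in> hom X (So ?P) ?P" using alg_prod_hom[OF A(2) B(2)] .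
  note laws1 = alg_mor_algebra_laws[OF \<alpha> alg_mor_pr1[OF A(2) B(2)] \<gamma>]
  note laws2 = alg_mor_algebra_laws[OF \<beta> alg_mor_pr2[OF A(2) B(2)] \<gamma>]
  have "ccomp X ?\<gamma> (mu ?P) = ccomp X ?\<gamma> (Sa ?\<gamma>)"
    using pair_ext[OF comp_hom[OF mu_hom[OF P] \<gamma>] comp_hom[OF S_hom[OF \<gamma>] \<gamma>]] laws1(1) laws2(1) by blast
  moreover have "ccomp X ?\<gamma> (eta ?P) = cid X ?P"
    using pair_ext[OF comp_hom[OF eta_hom[OF P] \<gamma>] id_hom[OF P]] laws1(2) laws2(2)
      comp_id_right[OF pr1_hom[OF A(1) B(1)]] comp_id_right[OF pr2_hom[OF A(1) B(1)]] by simp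
  ultimately show ?thesis unfolding is_alg_def using P \<gamma> by blast
qed

lemma alg_mor_id: "is_alg X So Sa mu eta A \<alpha> \<Longrightarrow> alg_mor X Sa A \<alpha> A \<alpha> (cid X A)"
  unfolding alg_mor_def using is_algD(1,2) S_id comp_id_right comp_id_left id_hom by metis

lemma alg_mor_comp:
  assumes f: "alg_mor X Sa A \<alpha> B \<beta> f" and g: "alg_mor X Sa B \<beta> E \<gamma> g"
    and \<alpha>: "\<alpha> \<in> hom X (So A) A" and \<beta>: "\<beta> \<in> hom X (So B) B" and \<gamma>: "\<gamma> \<in> hom X (So E) E"
  shows "alg_mor X Sa A \<alpha> E \<gamma> (ccomp X g f)"
proof -
  have f_hom: "f \<in> hom X A B" and f_eq: "ccomp X \<beta> (Sa f) = ccomp X f \<alpha>"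
    and g_hom: "g \<in> hom X B E" and g_eq: "ccomp X \<gamma> (Sa g) = ccomp X g \<beta>"
    using f g unfolding alg_mor_def by auto
  have "ccomp X \<gamma> (Sa (ccomp X g f)) = ccomp X (ccomp X \<gamma> (Sa g)) (Sa f)"
    using S_comp[OF f_hom g_hom] comp_assoc[OF S_hom[OF f_hom] S_hom[OF g_hom] \<gamma>] by simp
  also have "\<dots> = ccomp X g (ccomp X \<beta> (Sa f))"
    using g_eq comp_assoc[OF S_hom[OF f_hom] \<beta> g_hom] by simp
  also have "\<dots> = ccomp X (ccomp X g f) \<alpha>"
    using f_eq comp_assoc[OF \<alpha> f_hom g_hom] by simp
  finally show ?thesis unfolding alg_mor_def using f_hom g_hom by blast
qed

lemma alg_mor_pair:
  assumes f: "alg_mor X Sa Z \<zeta> A \<alpha> f" and g: "alg_mor X Sa Z \<zeta> B \<beta> g"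
    and \<zeta>: "\<zeta> \<in> hom X (So Z) Z" and \<alpha>: "\<alpha> \<in> hom X (So A) A" and \<beta>: "\<beta> \<in> hom X (So B) B"
  shows "alg_mor X Sa Z \<zeta> (cprod X A B) (alg_prod X So Sa A \<alpha> B \<beta>) (cpair X f g)"
proof -
  let ?\<gamma> = "alg_prod X So Sa A \<alpha> B \<beta>"
  have f_hom: "f \<in> hom X Z A" and f_eq: "ccomp X \<alpha> (Sa f) = ccomp X f \<zeta>"
    and g_hom: "g \<in> hom X Z B" and g_eq: "ccomp X \<beta> (Sa g) = ccomp X g \<zeta>"
    using f g unfolding alg_mor_def by auto
  have A: "A \<in> cObj X" and B: "B \<in> cObj X" using \<alpha> \<beta> hom_cod_obj by blast+
  have fg: "cpair X f g \<in> hom X Z (cprod X A B)" using f_hom g_hom by blast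
  have \<gamma>: "?\<gamma> \<in> hom X (So (cprod X A B)) (cprod X A B)" using alg_prod_hom[OF \<alpha> \<beta>] .
  have "ccomp X (cpr1 X A B) (ccomp X ?\<gamma> (Sa (cpair X f g)))
      = ccomp X (cpr1 X A B) (ccomp X (cpair X f g) \<zeta>)"
    using alg_mor_comp_S[OF alg_mor_pr1[OF \<alpha> \<beta>] \<gamma> \<alpha> fg] f_eq comp_assoc[OF \<zeta> fg pr1_hom[OF A B]]
      f_hom g_hom by simp
  moreover have "ccomp X (cpr2 X A B) (ccomp X ?\<gamma> (Sa (cpair X f g)))
      = ccomp X (cpr2 X A B) (ccomp X (cpair X f g) \<zeta>)"
    using alg_mor_comp_S[OF alg_mor_pr2[OF \<alpha> \<beta>] \<gamma> \<beta> fg] g_eq comp_assoc[OF \<zeta> fg pr2_hom[OF A B]]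
      f_hom g_hom by simp
  ultimately have "ccomp X ?\<gamma> (Sa (cpair X f g)) = ccomp X (cpair X f g) \<zeta>"
    using pair_ext[OF comp_hom[OF S_hom[OF fg] \<gamma>] comp_hom[OF \<zeta> fg]] by blast
  then show ?thesis unfolding alg_mor_def using fg by blast
qed

lemma terminal_is_alg: "is_alg X So Sa mu eta (cterm X) (czero X (So (cterm X)) (cterm X))"
proof -
  have T: "cterm X \<in> cObj X" by (rule terminal_obj)
  have z: "czero X (So (cterm X)) (cterm X) \<in> hom X (So (cterm X)) (cterm X)" using T by blast
  show ?thesis unfolding is_alg_def
    using T z terminal_unique comp_hom[OF mu_hom[OF T] z] comp_hom[OF S_hom[OF z] z]
      comp_hom[OF eta_hom[OF T] z] id_hom[OF T] by blast
qed

lemma alg_mor_terminal: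
  assumes "\<alpha> \<in> hom X (So A) A" and t: "t \<in> hom X A (cterm X)"
  shows "alg_mor X Sa A \<alpha> (cterm X) (czero X (So (cterm X)) (cterm X)) t"
proof -
  have T: "cterm X \<in> cObj X" by (rule terminal_obj)
  have z: "czero X (So (cterm X)) (cterm X) \<in> hom X (So (cterm X)) (cterm X)" using T by blast
  show ?thesis unfolding alg_mor_def
    using t terminal_unique comp_hom[OF S_hom[OF t] z] comp_hom[OF assms(1) t] by blast
qed

end
locale diff_monad = cartesian_differential +
  fixes So :: "'o \<Rightarrow> 'o" and Sa :: "'a \<Rightarrow> 'a" and mu eta :: "'o \<Rightarrow> 'a"
  assumes diff_monad: "cart_diff_monad X So Sa mu eta"

sublocale diff_monad \<subseteq> cartesian_monad
  using diff_monad unfolding cart_diff_monad_def by unfold_locales (rule conjunct1)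

context diff_monad
begin

lemma S_lin_comb: "f \<in> hom X A B \<Longrightarrow> g \<in> hom X A B \<Longrightarrow>
    Sa (cadd X (csmult X r f) (csmult X s g)) = cadd X (csmult X r (Sa f)) (csmult X s (Sa g))"
  and omega_iso: "A \<in> cObj X \<Longrightarrow> B \<in> cObj X \<Longrightarrow> iso X (omega X X So Sa A B)"
  and S_D: "f \<in> hom X A B \<Longrightarrow> cD X (Sa f) = ccomp X (Sa (cD X f)) (inv_arr X (omega X X So Sa A A))"
  using diff_monad unfolding cart_diff_monad_def strong_cart_diff_functor_def strong_cart_lin_functor_def
  by auto

lemma S_add:
  assumes "f \<in> hom X A B" and "g \<in> hom X A B"
  shows "Sa (cadd X f g) = cadd X (Sa f) (Sa g)"
  using S_lin_comb[OF assms, of 1 1] lin_comb_one_one[OF assms] lin_comb_one_one[OF S_hom S_hom, OF assms]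
  by simp

lemma S_smult:
  assumes "f \<in> hom X A B"
  shows "Sa (csmult X r f) = csmult X r (Sa f)"
  using S_lin_comb[OF assms assms, of r 0] lin_comb_zero_right[OF assms assms]
    lin_comb_zero_right[OF S_hom S_hom, OF assms assms] by simp

lemma S_zero:
  assumes "A \<in> cObj X" and "B \<in> cObj X"
  shows "Sa (czero X A B) = czero X (So A) (So B)"
proof -
  have z: "czero X A B \<in> hom X A B" using assms by blast
  show ?thesis
    using S_lin_comb[OF z z, of 0 0] lin_comb_zero_zero[OF z z] lin_comb_zero_zero[OF S_hom S_hom, OF z z]
    by simp
qed

lemma omega_inverse:
  assumes "A \<in> cObj X" and "B \<in> cObj X"
  shows "inv_arr X (omega X X So Sa A B) \<in> hom X (cprod X (So A) (So B)) (So (cprod X A B))"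
    and "ccomp X (inv_arr X (omega X X So Sa A B)) (omega X X So Sa A B) = cid X (So (cprod X A B))"
    and "ccomp X (omega X X So Sa A B) (inv_arr X (omega X X So Sa A B)) = cid X (cprod X (So A) (So B))"
  using inv_arr_hom_and_inverse[OF omega_iso[OF assms] omega_hom[OF assms]] by auto

lemma S_D_eq_D_S_omega:
  assumes f: "f \<in> hom X A B"
  shows "Sa (cD X f) = ccomp X (cD X (Sa f)) (omega X X So Sa A A)"
proof -
  have A: "A \<in> cObj X" using f hom_dom_obj by blast
  note \<omega> = omega_hom[OF A A] and \<omega>' = omega_inverse[OF A A]
  have SDf: "Sa (cD X f) \<in> hom X (So (cprod X A A)) (So B)" using f by blast
  have "ccomp X (cD X (Sa f)) (omega X X So Sa A A)
      = ccomp X (Sa (cD X f)) (ccomp X (inv_arr X (omega X X So Sa A A)) (omega X X So Sa A A))"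
    using S_D[OF f] comp_assoc[OF \<omega> \<omega>'(1) SDf] by simp
  also have "\<dots> = Sa (cD X f)" using \<omega>'(2) comp_id_right[OF SDf] by simp
  finally show ?thesis by simp
qed

lemma D_linear_S:
  assumes "D_linear X p" and p: "p \<in> hom X P E"
  shows "D_linear X (Sa p)"
proof -
  have P: "P \<in> cObj X" using p hom_dom_obj by blast
  have SP: "So P \<in> cObj X" using P by blast
  note \<omega> = omega_hom[OF P P] and \<omega>' = omega_inverse[OF P P]
  have \<pi>\<omega>: "ccomp X (cpr2 X (So P) (So P)) (omega X X So Sa P P) \<in> hom X (So (cprod X P P)) (So P)"
    using \<omega> SP by blast
  have "cD X (Sa p) = ccomp X (ccomp X (Sa p) (ccomp X (cpr2 X (So P) (So P)) (omega X X So Sa P P)))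
      (inv_arr X (omega X X So Sa P P))"
    using S_D[OF p] assms(1)[unfolded D_linear_iff[OF p]] S_comp[OF pr2_hom[OF P P] p] pr2_omega[OF P P]
    by simp
  also have "\<dots> = ccomp X (Sa p) (ccomp X (cpr2 X (So P) (So P))
      (ccomp X (omega X X So Sa P P) (inv_arr X (omega X X So Sa P P))))"
    using comp_assoc[OF \<omega>'(1) \<pi>\<omega> S_hom[OF p]] comp_assoc[OF \<omega>'(1) \<omega> pr2_hom[OF SP SP]] by simp
  also have "\<dots> = ccomp X (Sa p) (cpr2 X (So P) (So P))"
    using \<omega>'(3) comp_id_right[OF pr2_hom[OF SP SP]] by simp
  finally show ?thesis using D_linear_iff[OF S_hom[OF p]] by simp
qed

lemma alg_prod_D_linear:
  assumes "D_linear X \<alpha>" and \<alpha>: "\<alpha> \<in> hom X (So A) A" and "D_linear X \<beta>" and \<beta>: "\<beta> \<in> hom X (So B) B"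
  shows "D_linear X (alg_prod X So Sa A \<alpha> B \<beta>)"
proof -
  have A: "A \<in> cObj X" and B: "B \<in> cObj X" using \<alpha> \<beta> hom_cod_obj by blast+
  have S\<pi>1: "D_linear X (Sa (cpr1 X A B))" and S\<pi>2: "D_linear X (Sa (cpr2 X A B))"
    using D_linear_S D_linear_pr1[OF A B] D_linear_pr2[OF A B] pr1_hom[OF A B] pr2_hom[OF A B] by blast+
  show ?thesis
    unfolding alg_prod_eq_pair[OF \<alpha> \<beta>]
    using D_linear_pair[OF D_linear_comp[OF S\<pi>1 S_hom assms(1) \<alpha>] _ D_linear_comp[OF S\<pi>2 S_hom assms(3) \<beta>]]
      pr1_hom[OF A B] pr2_hom[OF A B] \<alpha> \<beta> by blast
qed

lemma terminal_D_linear: "D_linear X (czero X (So (cterm X)) (cterm X))"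
proof -
  have ST: "So (cterm X) \<in> cObj X" using terminal_obj by blast
  have z: "czero X (So (cterm X)) (cterm X) \<in> hom X (So (cterm X)) (cterm X)" using ST terminal_obj by blast
  show ?thesis
    unfolding D_linear_iff[OF z] using terminal_unique D_hom[OF z] comp_hom[OF pr2_hom[OF ST ST] z] by blast
qed

lemma alg_mor_add:
  assumes f: "alg_mor X Sa A \<alpha> B \<beta> f" and g: "alg_mor X Sa A \<alpha> B \<beta> g"
    and \<alpha>: "\<alpha> \<in> hom X (So A) A" and \<beta>: "\<beta> \<in> hom X (So B) B" and "D_linear X \<beta>"
  shows "alg_mor X Sa A \<alpha> B \<beta> (cadd X f g)"
proof -
  have f_hom: "f \<in> hom X A B" and f_eq: "ccomp X \<beta> (Sa f) = ccomp X f \<alpha>"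
    and g_hom: "g \<in> hom X A B" and g_eq: "ccomp X \<beta> (Sa g) = ccomp X g \<alpha>"
    using f g unfolding alg_mor_def by auto
  have "ccomp X \<beta> (Sa (cadd X f g)) = cadd X (ccomp X \<beta> (Sa f)) (ccomp X \<beta> (Sa g))"
    using S_add[OF f_hom g_hom] k_linear_add[OF D_linear_imp_k_linear[OF assms(5) \<beta>] \<beta> S_hom S_hom, OF f_hom g_hom]
    by simp
  also have "\<dots> = ccomp X (cadd X f g) \<alpha>" using f_eq g_eq comp_add[OF \<alpha> f_hom g_hom] by simp
  finally show ?thesis unfolding alg_mor_def using f_hom g_hom by blast
qed

lemma alg_mor_smult:
  assumes f: "alg_mor X Sa A \<alpha> B \<beta> f"
    and \<alpha>: "\<alpha> \<in> hom X (So A) A" and \<beta>: "\<beta> \<in> hom X (So B) B" and "D_linear X \<beta>"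
  shows "alg_mor X Sa A \<alpha> B \<beta> (csmult X r f)"
proof -
  have f_hom: "f \<in> hom X A B" and f_eq: "ccomp X \<beta> (Sa f) = ccomp X f \<alpha>"
    using f unfolding alg_mor_def by auto
  have "ccomp X \<beta> (Sa (csmult X r f)) = csmult X r (ccomp X \<beta> (Sa f))"
    using S_smult[OF f_hom] k_linear_smult[OF D_linear_imp_k_linear[OF assms(4) \<beta>] \<beta> S_hom[OF f_hom]]
    by simp
  also have "\<dots> = ccomp X (csmult X r f) \<alpha>" using f_eq comp_smult[OF \<alpha> f_hom] by simp
  finally show ?thesis unfolding alg_mor_def using f_hom by blast
qed

lemma alg_mor_zero:
  assumes \<alpha>: "\<alpha> \<in> hom X (So A) A" and \<beta>: "\<beta> \<in> hom X (So B) B" and "D_linear X \<beta>"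
  shows "alg_mor X Sa A \<alpha> B \<beta> (czero X A B)"
proof -
  have A: "A \<in> cObj X" and B: "B \<in> cObj X" using \<alpha> \<beta> hom_cod_obj by blast+
  have "ccomp X \<beta> (Sa (czero X A B)) = czero X (So A) B"
    using S_zero[OF A B] k_linear_zero[OF D_linear_imp_k_linear[OF assms(3) \<beta>] \<beta> S_obj[OF A]] by simp
  also have "\<dots> = ccomp X (czero X A B) \<alpha>" using zero_comp[OF \<alpha> B] by simp
  finally show ?thesis unfolding alg_mor_def using A B by blast
qed

lemma D_alg_mor:
  assumes "D_linear X \<alpha>" and \<alpha>: "\<alpha> \<in> hom X (So A) A" and "D_linear X \<beta>" and \<beta>: "\<beta> \<in> hom X (So B) B"
    and f: "alg_mor X Sa A \<alpha> B \<beta> f"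
  shows "alg_mor X Sa (cprod X A A) (alg_prod X So Sa A \<alpha> A \<alpha>) B \<beta> (cD X f)"
proof -
  have f_hom: "f \<in> hom X A B" and f_eq: "ccomp X \<beta> (Sa f) = ccomp X f \<alpha>"
    using f unfolding alg_mor_def by auto
  have A: "A \<in> cObj X" and SA: "So A \<in> cObj X" using f_hom hom_dom_obj by blast+
  note \<omega> = omega_hom[OF A A]
  have Sf: "Sa f \<in> hom X (So A) (So B)" using f_hom by blast
  have DSf: "cD X (Sa f) \<in> hom X (cprod X (So A) (So A)) (So B)" using Sf by blast
  have \<alpha>\<alpha>: "cpair X (ccomp X \<alpha> (cpr1 X (So A) (So A))) (ccomp X \<alpha> (cpr2 X (So A) (So A)))
      \<in> hom X (cprod X (So A) (So A)) (cprod X A A)"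
    using \<alpha> SA by blast
  have "ccomp X \<beta> (cD X (Sa f)) = cD X (ccomp X \<beta> (Sa f))"
    using D_comp[OF Sf \<beta>] D_linear_D_pair[OF assms(3) \<beta> comp_hom[OF pr1_hom[OF SA SA] Sf] DSf] by simp
  also have "\<dots> = cD X (ccomp X f \<alpha>)" using f_eq by simp
  also have "\<dots> = ccomp X (cD X f)
      (cpair X (ccomp X \<alpha> (cpr1 X (So A) (So A))) (ccomp X \<alpha> (cpr2 X (So A) (So A))))"
    using D_comp[OF \<alpha> f_hom] assms(1)[unfolded D_linear_iff[OF \<alpha>]] by simp
  finally have \<beta>DSf: "ccomp X \<beta> (cD X (Sa f))
      = ccomp X (cD X f) (cpair X (ccomp X \<alpha> (cpr1 X (So A) (So A))) (ccomp X \<alpha> (cpr2 X (So A) (So A))))" .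
  have "ccomp X \<beta> (Sa (cD X f)) = ccomp X (ccomp X \<beta> (cD X (Sa f))) (omega X X So Sa A A)"
    using S_D_eq_D_S_omega[OF f_hom] comp_assoc[OF \<omega> DSf \<beta>] by simp
  also have "\<dots> = ccomp X (cD X f) (alg_prod X So Sa A \<alpha> A \<alpha>)"
    unfolding \<beta>DSf alg_prod_def using comp_assoc[OF \<omega> \<alpha>\<alpha> D_hom[OF f_hom]] by simp
  finally show ?thesis unfolding alg_mor_def using f_hom by blast
qed

abbreviation DiffEM where
  "DiffEM \<equiv> DIFF_EM X So Sa mu eta"

lemma DIFF_obj_iff [simp]:
  "(A, \<alpha>) \<in> DIFF_obj X So Sa mu eta \<longleftrightarrow> is_alg X So Sa mu eta A \<alpha> \<and> D_linear X \<alpha>"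
  unfolding DIFF_obj_def by simp

lemma DiffEM_simps [simp]:
  "cObj DiffEM = DIFF_obj X So Sa mu eta"
  "cdom DiffEM (P, Q, f) = P"
  "ccod DiffEM (P, Q, f) = Q"
  "ccomp DiffEM (Q, R, g) (P, Q', f) = (P, R, ccomp X g f)"
  "cid DiffEM P = (P, P, cid X (fst P))"
  "cadd DiffEM (P, Q, f) (P', Q', g) = (P, Q, cadd X f g)"
  "csmult DiffEM r (P, Q, f) = (P, Q, csmult X r f)"
  "czero DiffEM P Q = (P, Q, czero X (fst P) (fst Q))"
  "cterm DiffEM = (cterm X, czero X (So (cterm X)) (cterm X))"
  "cprod DiffEM P Q = (cprod X (fst P) (fst Q), alg_prod X So Sa (fst P) (snd P) (fst Q) (snd Q))"
  "cpr1 DiffEM P Q = (cprod DiffEM P Q, P, cpr1 X (fst P) (fst Q))"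
  "cpr2 DiffEM P Q = (cprod DiffEM P Q, Q, cpr2 X (fst P) (fst Q))"
  "cpair DiffEM (P, Q, f) (P', Q', g) = (P, cprod DiffEM Q Q', cpair X f g)"
  "cD DiffEM (P, Q, f) = (cprod DiffEM P P, Q, cD X f)"
  unfolding DIFF_EM_def DIFF_prod_def by simp_all

lemma DiffEM_hom_iff:
  "(P', Q', f) \<in> hom DiffEM P Q \<longleftrightarrow> P' = P \<and> Q' = Q \<and>
    P \<in> DIFF_obj X So Sa mu eta \<and> Q \<in> DIFF_obj X So Sa mu eta \<and>
    alg_mor X Sa (fst P) (snd P) (fst Q) (snd Q) f"
  unfolding hom_def DIFF_EM_def by auto

lemma DiffEM_homE [elim!]:
  assumes "x \<in> hom DiffEM (A, \<alpha>) (B, \<beta>)"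
  obtains f where "x = ((A, \<alpha>), (B, \<beta>), f)" and "is_alg X So Sa mu eta A \<alpha>" and "D_linear X \<alpha>"
    and "is_alg X So Sa mu eta B \<beta>" and "D_linear X \<beta>" and "alg_mor X Sa A \<alpha> B \<beta> f"
  using assms by (cases x) (auto simp: DiffEM_hom_iff)

lemma DiffEM_homI:
  "is_alg X So Sa mu eta A \<alpha> \<Longrightarrow> D_linear X \<alpha> \<Longrightarrow> is_alg X So Sa mu eta B \<beta> \<Longrightarrow> D_linear X \<beta> \<Longrightarrow>
    alg_mor X Sa A \<alpha> B \<beta> f \<Longrightarrow> ((A, \<alpha>), (B, \<beta>), f) \<in> hom DiffEM (A, \<alpha>) (B, \<beta>)"
  by (simp add: DiffEM_hom_iff)

lemma DIFF_obj_prod: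
  assumes "is_alg X So Sa mu eta A \<alpha>" and "D_linear X \<alpha>" and "is_alg X So Sa mu eta B \<beta>" and "D_linear X \<beta>"
  shows "is_alg X So Sa mu eta (cprod X A B) (alg_prod X So Sa A \<alpha> B \<beta>)"
    and "D_linear X (alg_prod X So Sa A \<alpha> B \<beta>)"
  using alg_prod_is_alg[OF assms(1,3)]
    alg_prod_D_linear[OF assms(2) is_algD(2)[OF assms(1)] assms(4) is_algD(2)[OF assms(3)]]
  by auto

lemma DiffEM_category: "category DiffEM"
  unfolding category_def
proof (intro conjI)
  show "\<forall>f\<in>cArr DiffEM. cdom DiffEM f \<in> cObj DiffEM \<and> ccod DiffEM f \<in> cObj DiffEM"
    unfolding DIFF_EM_def by auto
  show "\<forall>A\<in>cObj DiffEM. cid DiffEM A \<in> hom DiffEM A A"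
    by (auto intro!: DiffEM_homI alg_mor_id)
  show "\<forall>A B E f g. f \<in> hom DiffEM A B \<longrightarrow> g \<in> hom DiffEM B E \<longrightarrow>
      ccomp DiffEM g f \<in> hom DiffEM A E"
    by (auto intro!: DiffEM_homI alg_mor_comp dest: is_algD(2))
qed (auto dest!: alg_mor_hom intro: comp_assoc comp_id_left comp_id_right)

lemma DiffEM_left_linear: "left_lin_cat DiffEM"
  unfolding left_lin_cat_def
proof (intro conjI)
  show "category DiffEM" by (rule DiffEM_category)
  show "\<forall>A\<in>cObj DiffEM. \<forall>B\<in>cObj DiffEM. czero DiffEM A B \<in> hom DiffEM A B"
    by (auto intro!: DiffEM_homI alg_mor_zero dest: is_algD(2))
  show "\<forall>A B f g. f \<in> hom DiffEM A B \<longrightarrow> g \<in> hom DiffEM A B \<longrightarrow> cadd DiffEM f g \<in> hom DiffEM A B"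
    by (auto intro!: DiffEM_homI alg_mor_add dest: is_algD(2))
  show "\<forall>A B r f. f \<in> hom DiffEM A B \<longrightarrow> csmult DiffEM r f \<in> hom DiffEM A B"
    by (auto intro!: DiffEM_homI alg_mor_smult dest: is_algD(2))
qed (auto dest!: alg_mor_hom is_algD(1) intro: add_assoc add_comm add_zero smult_add add_smult mult_smult
      one_smult zero_smult smult_zero comp_lin_comb)

lemma DiffEM_cartesian_linear: "cart_lin_cat DiffEM"
  unfolding cart_lin_cat_def
proof (intro conjI)
  show "left_lin_cat DiffEM" by (rule DiffEM_left_linear)
  show "cterm DiffEM \<in> cObj DiffEM" using terminal_is_alg terminal_D_linear by simp
  show "\<forall>P\<in>cObj DiffEM. \<exists>!t. t \<in> hom DiffEM P (cterm DiffEM)"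
  proof
    fix P assume "P \<in> cObj DiffEM"
    then obtain A \<alpha> where P: "P = (A, \<alpha>)" and \<alpha>: "is_alg X So Sa mu eta A \<alpha>" "D_linear X \<alpha>"
      by (cases P) auto
    have t: "czero X A (cterm X) \<in> hom X A (cterm X)" using is_algD(1)[OF \<alpha>(1)] terminal_obj by blast
    show "\<exists>!t. t \<in> hom DiffEM P (cterm DiffEM)"
    proof
      show "(P, cterm DiffEM, czero X A (cterm X)) \<in> hom DiffEM P (cterm DiffEM)"
        using DiffEM_homI[OF \<alpha> terminal_is_alg terminal_D_linear alg_mor_terminal[OF is_algD(2)[OF \<alpha>(1)] t]]
        unfolding P by simp
      show "t' = (P, cterm DiffEM, czero X A (cterm X))" if "t' \<in> hom DiffEM P (cterm DiffEM)" for t'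
        using that t terminal_unique unfolding P by (auto dest!: alg_mor_hom)
    qed
  qed
  show "\<forall>P\<in>cObj DiffEM. \<forall>Q\<in>cObj DiffEM. cprod DiffEM P Q \<in> cObj DiffEM \<and>
      cpr1 DiffEM P Q \<in> hom DiffEM (cprod DiffEM P Q) P \<and> cpr2 DiffEM P Q \<in> hom DiffEM (cprod DiffEM P Q) Q \<and>
      k_linear DiffEM (cpr1 DiffEM P Q) \<and> k_linear DiffEM (cpr2 DiffEM P Q)"
  proof (intro ballI conjI)
    fix P Q assume "P \<in> cObj DiffEM" "Q \<in> cObj DiffEM"
    then obtain A \<alpha> B \<beta> where P: "P = (A, \<alpha>)" and \<alpha>: "is_alg X So Sa mu eta A \<alpha>" "D_linear X \<alpha>"
      and Q: "Q = (B, \<beta>)" and \<beta>: "is_alg X So Sa mu eta B \<beta>" "D_linear X \<beta>"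
      by (cases P, cases Q) auto
    have A: "A \<in> cObj X" and B: "B \<in> cObj X" using \<alpha> \<beta> is_algD(1) by blast+
    note PQ = DIFF_obj_prod[OF \<alpha> \<beta>]
    show "cprod DiffEM P Q \<in> cObj DiffEM" unfolding P Q using PQ by simp
    show "cpr1 DiffEM P Q \<in> hom DiffEM (cprod DiffEM P Q) P" unfolding P Q
      using DiffEM_homI[OF PQ \<alpha> alg_mor_pr1[OF is_algD(2)[OF \<alpha>(1)] is_algD(2)[OF \<beta>(1)]]] by simp
    show "cpr2 DiffEM P Q \<in> hom DiffEM (cprod DiffEM P Q) Q" unfolding P Q
      using DiffEM_homI[OF PQ \<beta> alg_mor_pr2[OF is_algD(2)[OF \<alpha>(1)] is_algD(2)[OF \<beta>(1)]]] by simp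
    have "cdom X (cpr1 X A B) = cprod X A B" and "cdom X (cpr2 X A B) = cprod X A B"
      using pr1_hom[OF A B] pr2_hom[OF A B] unfolding hom_def by auto
    then show "k_linear DiffEM (cpr1 DiffEM P Q)" and "k_linear DiffEM (cpr2 DiffEM P Q)"
      using pr1_k_linear[OF A B] pr2_k_linear[OF A B] unfolding k_linear_def P Q
      by (auto dest!: alg_mor_hom)
  qed
  show "\<forall>Z P Q f g. f \<in> hom DiffEM Z P \<longrightarrow> g \<in> hom DiffEM Z Q \<longrightarrow>
      cpair DiffEM f g \<in> hom DiffEM Z (cprod DiffEM P Q) \<and>
      ccomp DiffEM (cpr1 DiffEM P Q) (cpair DiffEM f g) = f \<and> ccomp DiffEM (cpr2 DiffEM P Q) (cpair DiffEM f g) = g"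
  proof (intro allI impI)
    fix Z P Q f g assume f: "f \<in> hom DiffEM Z P" and g: "g \<in> hom DiffEM Z Q"
    obtain C \<zeta> A \<alpha> B \<beta> where Z: "Z = (C, \<zeta>)" and P: "P = (A, \<alpha>)" and Q: "Q = (B, \<beta>)"
      by (cases Z, cases P, cases Q) auto
    obtain f' where f': "f = (Z, P, f')" and \<zeta>: "is_alg X So Sa mu eta C \<zeta>" "D_linear X \<zeta>"
      and \<alpha>: "is_alg X So Sa mu eta A \<alpha>" "D_linear X \<alpha>" and f'_mor: "alg_mor X Sa C \<zeta> A \<alpha> f'"
      using f unfolding Z P by blast
    obtain g' where g': "g = (Z, Q, g')" and \<beta>: "is_alg X So Sa mu eta B \<beta>" "D_linear X \<beta>"
      and g'_mor: "alg_mor X Sa C \<zeta> B \<beta> g'"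
      using g unfolding Z Q by blast
    have "alg_mor X Sa C \<zeta> (cprod X A B) (alg_prod X So Sa A \<alpha> B \<beta>) (cpair X f' g')"
      using alg_mor_pair[OF f'_mor g'_mor] is_algD(2) \<zeta> \<alpha> \<beta> by blast
    then show "cpair DiffEM f g \<in> hom DiffEM Z (cprod DiffEM P Q) \<and>
        ccomp DiffEM (cpr1 DiffEM P Q) (cpair DiffEM f g) = f \<and> ccomp DiffEM (cpr2 DiffEM P Q) (cpair DiffEM f g) = g"
      unfolding f' g' Z P Q
      using DiffEM_homI[OF \<zeta> DIFF_obj_prod[OF \<alpha> \<beta>]] alg_mor_hom[OF f'_mor] alg_mor_hom[OF g'_mor] by simp
  qed
  show "\<forall>Z P Q h. h \<in> hom DiffEM Z (cprod DiffEM P Q) \<longrightarrow>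
      cpair DiffEM (ccomp DiffEM (cpr1 DiffEM P Q) h) (ccomp DiffEM (cpr2 DiffEM P Q) h) = h"
    by (auto dest!: alg_mor_hom intro: pair_pr_comp simp: DiffEM_hom_iff)
qed

lemma DiffEM_cartesian_differential: "cart_diff_cat DiffEM"
  unfolding cart_diff_cat_def
proof (intro conjI)
  show "cart_lin_cat DiffEM" by (rule DiffEM_cartesian_linear)
  show "\<forall>P Q f. f \<in> hom DiffEM P Q \<longrightarrow> cD DiffEM f \<in> hom DiffEM (cprod DiffEM P P) Q"
  proof (intro allI impI)
    fix P Q f assume f: "f \<in> hom DiffEM P Q"
    obtain A \<alpha> B \<beta> where P: "P = (A, \<alpha>)" and Q: "Q = (B, \<beta>)" by (cases P, cases Q) auto
    obtain f' where f': "f = (P, Q, f')" and \<alpha>: "is_alg X So Sa mu eta A \<alpha>" "D_linear X \<alpha>"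
      and \<beta>: "is_alg X So Sa mu eta B \<beta>" "D_linear X \<beta>" and f'_mor: "alg_mor X Sa A \<alpha> B \<beta> f'"
      using f unfolding P Q by blast
    show "cD DiffEM f \<in> hom DiffEM (cprod DiffEM P P) Q" unfolding f' P Q
      using DiffEM_homI[OF DIFF_obj_prod[OF \<alpha> \<alpha>] \<beta>
          D_alg_mor[OF \<alpha>(2) is_algD(2)[OF \<alpha>(1)] \<beta>(2) is_algD(2)[OF \<beta>(1)] f'_mor]]
      by simp
  qed
qed (auto dest!: alg_mor_hom is_algD(1) simp: Let_def
      intro: D_lin_comb D_second_arg_lin_comb_pr D_id D_pr1 D_pr2 D_pair D_comp
        D_D_zero_insertion D_D_symmetric)

lemma forget_arr_apply [simp]: "forget_arr (P, Q, f) = f"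
  unfolding forget_arr_def by simp

lemma forget_strict_cart_diff_functor: "strict_cart_diff_functor DiffEM X fst forget_arr"
  unfolding strict_cart_diff_functor_def strict_cart_lin_functor_def strong_cart_lin_functor_def
proof (intro conjI)
  show "cfunctor DiffEM X fst forget_arr"
    unfolding cfunctor_def by (auto dest: is_algD(1) alg_mor_hom)
  show "\<forall>t. t \<in> hom X (fst (cterm DiffEM)) (cterm X) \<longrightarrow> iso X t"
    using terminal_unique id_hom[OF terminal_obj] iso_id[OF terminal_obj] by auto
  show "\<forall>P\<in>cObj DiffEM. \<forall>Q\<in>cObj DiffEM.
      omega DiffEM X fst forget_arr P Q = cid X (fst (cprod DiffEM P Q))"
    unfolding omega_def by (auto dest!: is_algD(1) simp: pair_pr_id)
  then show "\<forall>P\<in>cObj DiffEM. \<forall>Q\<in>cObj DiffEM. iso X (omega DiffEM X fst forget_arr P Q)"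
    by (auto dest!: is_algD(1) intro!: iso_id prod_obj)
qed auto

end

theorem mainTheorem11:
  fixes X :: "('o, 'a, 'k::comm_semiring_1) cdc"
    and So :: "'o \<Rightarrow> 'o" and Sa :: "'a \<Rightarrow> 'a" and mu eta :: "'o \<Rightarrow> 'a"
  assumes "cart_diff_cat X"
    and "cart_diff_monad X So Sa mu eta"
  shows "cart_diff_cat (DIFF_EM X So Sa mu eta)
       \<and> strict_cart_diff_functor (DIFF_EM X So Sa mu eta) X fst forget_arr
       \<and> (\<forall>A \<alpha> B \<beta> f. is_alg X So Sa mu eta A \<alpha> \<longrightarrow> D_linear X \<alpha> \<longrightarrow>
            is_alg X So Sa mu eta B \<beta> \<longrightarrow> D_linear X \<beta> \<longrightarrow>
            alg_mor X Sa A \<alpha> B \<beta> f \<longrightarrow>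
            alg_mor X Sa (cprod X A A) (alg_prod X So Sa A \<alpha> A \<alpha>) B \<beta> (cD X f))"
proof -
  interpret diff_monad X So Sa mu eta
    using assms by unfold_locales
  show ?thesis
    using DiffEM_cartesian_differential forget_strict_cart_diff_functor D_alg_mor is_algD(2) by blast
qed

end
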